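(* If the compact hyperbolic manifold $M_\Gamma$ contains $n$ pairwise disjoint embedded totally geodesic hypersurfaces, then $\dim H^1(\Gamma,{\mathbb R}^{d,1})\ge n$.
   Context: Minkowski space ${\mathbb R}^{d,1}$ is ${\mathbb R}^{d+1}$ with $\langle x,y\rangle_{d,1}=x_1y_1+\dots+x_dy_d-x_{d+1}y_{d+1}$. $O_+(d,1)$ is the group of linear maps preserving $\langle\cdot,\cdot\rangle_{d,1}$ and the sheet $\mathcal H^d=\{\langle x,x\rangle_{d,1}=-1,\ x_{d+1}>0\}$ (a model of hyperbolic space). $d\ge2$ and $\Gamma\subset O_+(d,1)$ is a subgroup acting freely, properly discontinuously and cocompactly on $\mathcal H^d$, so that $M_\Gamma=\mathcal H^d/\Gamma$ is a compact hyperbolic manifold, assumed oriented. A cocycle is a map $\tau:\Gamma\to{\mathbb R}^{d,1}$ with $\tau(AB)=\tau(A)+A\tau(B)$ for all $A,B\in\Gamma$; a coboundary is a cocycle of the form $\tau(A)=Av-v$ for a fixed $v\in{\mathbb R}^{d,1}$, and $H^1(\Gamma,{\mathbb R}^{d,1})$ is the quotient vector space of cocycles by coboundaries. *)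

theory Defs
  imports "HOL-Analysis.Analysis"
begin

text \<open>Minkowski space R^{d,1}: vectors real^'n with CARD('n) = d+1, and a
  distinguished time coordinate t (playing the role of x_{d+1}).\<close>

definition mink :: "'n::finite \<Rightarrow> real^'n \<Rightarrow> real^'n \<Rightarrow> real" where
  "mink t x y = (\<Sum>i\<in>UNIV - {t}. x$i * y$i) - x$t * y$t"

definition hyp :: "'n::finite \<Rightarrow> (real^'n) set" where
  "hyp t = {x. mink t x x = -1 \<and> x$t > 0}"

definition O_plus :: "'n::finite \<Rightarrow> (real^'n^'n) set" where
  "O_plus t = {A. (\<forall>x y. mink t (A *v x) (A *v y) = mink t x y) \<and> (\<lambda>x. A *v x) ` hyp t \<subseteq> hyp t}"

text \<open>Gamma is a subgroup of O_+(d,1) acting freely, properly discontinuously and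
  cocompactly on H^d, with oriented quotient (Gamma orientation preserving).\<close>
definition cocompact_lattice :: "'n::finite \<Rightarrow> (real^'n^'n) set \<Rightarrow> bool" where
  "cocompact_lattice t \<Gamma> \<longleftrightarrow>
     \<Gamma> \<subseteq> O_plus t \<and> mat 1 \<in> \<Gamma> \<and>
     (\<forall>A\<in>\<Gamma>. \<forall>B\<in>\<Gamma>. A ** B \<in> \<Gamma>) \<and> (\<forall>A\<in>\<Gamma>. matrix_inv A \<in> \<Gamma>) \<and>
     (\<forall>A\<in>\<Gamma>. \<forall>x\<in>hyp t. A *v x = x \<longrightarrow> A = mat 1) \<and>
     (\<forall>K. compact K \<and> K \<subseteq> hyp t \<longrightarrow> finite {A\<in>\<Gamma>. (\<lambda>x. A *v x) ` K \<inter> K \<noteq> {}}) \<and>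
     (\<exists>K. compact K \<and> K \<subseteq> hyp t \<and> (\<Union>A\<in>\<Gamma>. (\<lambda>x. A *v x) ` K) = hyp t)"

definition orientation_preserving :: "(real^'n::finite^'n) set \<Rightarrow> bool" where
  "orientation_preserving \<Gamma> \<longleftrightarrow> (\<forall>A\<in>\<Gamma>. det A > 0)"

definition hplane :: "'n::finite \<Rightarrow> real^'n \<Rightarrow> (real^'n) set" where
  "hplane t v = {x\<in>hyp t. mink t x v = 0}"

text \<open>An embedded (closed) totally geodesic hypersurface of M_Gamma, described by one
  lift hplane t v: its Gamma-translates are equal to it or disjoint from it
  (embeddedness), and their union (the full preimage in H^d) is closed.\<close>
definition embedded_tg_hypersurface :: "'n::finite \<Rightarrow> (real^'n^'n) set \<Rightarrow> real^'n \<Rightarrow> bool" where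
  "embedded_tg_hypersurface t \<Gamma> v \<longleftrightarrow>
     mink t v v = 1 \<and>
     (\<forall>A\<in>\<Gamma>. (\<lambda>x. A *v x) ` hplane t v = hplane t v \<or> (\<lambda>x. A *v x) ` hplane t v \<inter> hplane t v = {}) \<and>
     closed (\<Union>A\<in>\<Gamma>. (\<lambda>x. A *v x) ` hplane t v)"

text \<open>The images in M_Gamma of the hypersurfaces with lifts hplane t v, hplane t w are disjoint.\<close>
definition disjoint_hypersurfaces :: "'n::finite \<Rightarrow> (real^'n^'n) set \<Rightarrow> real^'n \<Rightarrow> real^'n \<Rightarrow> bool" where
  "disjoint_hypersurfaces t \<Gamma> v w \<longleftrightarrow> (\<forall>A\<in>\<Gamma>. (\<lambda>x. A *v x) ` hplane t v \<inter> hplane t w = {})"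

definition cocycle :: "(real^'n::finite^'n) set \<Rightarrow> (real^'n^'n \<Rightarrow> real^'n) \<Rightarrow> bool" where
  "cocycle \<Gamma> \<tau> \<longleftrightarrow> (\<forall>A\<in>\<Gamma>. \<forall>B\<in>\<Gamma>. \<tau> (A ** B) = \<tau> A + A *v \<tau> B)"

definition coboundary :: "(real^'n::finite^'n) set \<Rightarrow> (real^'n^'n \<Rightarrow> real^'n) \<Rightarrow> bool" where
  "coboundary \<Gamma> \<tau> \<longleftrightarrow> (\<exists>u. \<forall>A\<in>\<Gamma>. \<tau> A = A *v u - u)"

definition H1_dim_ge :: "(real^'n::finite^'n) set \<Rightarrow> nat \<Rightarrow> bool" where
  "H1_dim_ge \<Gamma> n \<longleftrightarrow>
     (\<exists>\<tau>::nat \<Rightarrow> real^'n^'n \<Rightarrow> real^'n.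
        (\<forall>i<n. cocycle \<Gamma> (\<tau> i)) \<and>
        (\<forall>c::nat \<Rightarrow> real. coboundary \<Gamma> (\<lambda>A. \<Sum>i<n. c i *\<^sub>R \<tau> i A) \<longrightarrow> (\<forall>i<n. c i = 0)))"

end

theory Submission
  imports Defs
begin

text \<open>
  For each hypersurface, the lifts of its Gamma-translates are the hyperplanes
  hplane t w with w in normals i = {+-A v i | A in Gamma}. Since the hypersurface
  is closed and embedded, these walls are pairwise disjoint and locally finite.
  Summing, over the walls separating x from y, their normals oriented from x
  towards y gives a vector wall_sum i x y that is additive along chains and
  Gamma-equivariant, so A |-> wall_sum i x0 (A x0) is a cocycle for a base point x0.

  If a combination of these cocycles with coefficients c is the coboundary of u,
  then the potential F y = u + (SUM i. c i * wall_sum i x0 y) is Gamma-equivariant, so by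
  cocompactness the pairing <y, F y> is bounded. F is constant along each wall,
  and a totally geodesic hyperplane is unbounded in every spacelike direction
  orthogonal to its normal q, so F is a multiple of q on the wall. Crossing from
  that wall to the first neighbouring wall changes F by c j * q, which forces
  <F, q> = - c j; the same argument for - q gives c j = 0.
\<close>

section \<open>Minkowski space and the hyperboloid\<close>

definition space_part :: "'n::finite \<Rightarrow> real^'n \<Rightarrow> real^'n" where
  "space_part t x = (\<chi> i. if i = t then 0 else x$i)"

lemma mink_space_part: "mink t x y = space_part t x \<bullet> space_part t y - x$t * y$t"
proof -
  have "space_part t x \<bullet> space_part t y = (\<Sum>i\<in>UNIV. (if i = t then 0 else x$i*y$i))"
    by (simp add: space_part_def inner_vec_def if_distrib cong: if_cong)
  also have "\<dots> = (\<Sum>i\<in>UNIV - {t}. x$i*y$i)"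
    by (simp add: sum.If_cases Diff_eq)
  finally show ?thesis by (simp add: mink_def)
qed

lemma norm_power2_space_part: "(norm x)^2 = (norm (space_part t x))^2 + (x$t)^2"
proof -
  have "(norm (space_part t x))^2 = (\<Sum>i\<in>UNIV. (if i = t then 0 else (x$i)^2))"
    unfolding norm_vec_def L2_set_def
    by (simp add: sum_nonneg) (rule sum.cong, auto simp: space_part_def)
  also have "\<dots> = (\<Sum>i\<in>UNIV - {t}. (x$i)^2)"
    by (simp add: sum.If_cases Diff_eq)
  finally have "(norm (space_part t x))^2 = (\<Sum>i\<in>UNIV - {t}. (x$i)^2)" .
  moreover have "(norm x)^2 = (\<Sum>i\<in>UNIV - {t}. (x$i)^2) + (x$t)^2"
    by (simp add: norm_vec_def L2_set_def sum_nonneg) (metis add.commute finite UNIV_I sum.remove)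
  ultimately show ?thesis by simp
qed

lemma mink_self_space_part: "mink t x x = (norm (space_part t x))^2 - (x$t)^2"
  by (simp add: mink_space_part dot_square_norm power2_eq_square)

lemma hyp_norm_space_part: "x \<in> hyp t \<Longrightarrow> (norm (space_part t x))^2 = (x$t)^2 - 1"
  using mink_self_space_part[of t x] by (simp add: hyp_def)

lemma mink_sym: "mink t x y = mink t y x"
  by (simp add: mink_def mult.commute)

lemma mink_add_left: "mink t (x + y) z = mink t x z + mink t y z"
  by (simp add: mink_def sum.distrib algebra_simps)

lemma mink_add_right: "mink t z (x + y) = mink t z x + mink t z y"
  by (simp add: mink_def sum.distrib algebra_simps)

lemma mink_diff_left: "mink t (x - y) z = mink t x z - mink t y z"
  by (simp add: mink_def sum_subtractf algebra_simps)

lemma mink_diff_right: "mink t z (x - y) = mink t z x - mink t z y"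
  by (simp add: mink_def sum_subtractf algebra_simps)

lemma mink_scale_left: "mink t (a *\<^sub>R x) z = a * mink t x z"
  by (simp add: mink_def sum_distrib_left algebra_simps)

lemma mink_scale_right: "mink t z (a *\<^sub>R x) = a * mink t z x"
  by (simp add: mink_def sum_distrib_left algebra_simps)

lemma mink_neg_right: "mink t z (- x) = - mink t z x"
  by (simp add: mink_def sum_negf algebra_simps)

lemma mink_zero_left [simp]: "mink t 0 z = 0"
  by (simp add: mink_def)

lemma mink_zero_right [simp]: "mink t z 0 = 0"
  by (simp add: mink_def)

lemma mink_lincomb_self:
  "mink t (p *\<^sub>R x + q *\<^sub>R y) (p *\<^sub>R x + q *\<^sub>R y)
     = p*p*mink t x x + 2*p*q*mink t x y + q*q*mink t y y"
  unfolding mink_add_left mink_add_right mink_scale_left mink_scale_right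
  by (simp add: mink_sym[of t y x] algebra_simps)

lemma mink_geodesic:
  "mink t (cosh s *\<^sub>R y + sinh s *\<^sub>R e) z = cosh s * mink t y z + sinh s * mink t e z"
  unfolding mink_add_left mink_scale_left ..

definition time_reflect :: "'n::finite \<Rightarrow> real^'n \<Rightarrow> real^'n" where
  "time_reflect t z = (\<chi> i. if i = t then - z$i else z$i)"

lemma mink_time_reflect: "mink t x z = x \<bullet> time_reflect t z"
proof -
  have "x \<bullet> time_reflect t z = (\<Sum>i\<in>UNIV. (if i = t then - (x$i*z$i) else x$i*z$i))"
    unfolding inner_vec_def time_reflect_def by (rule sum.cong) auto
  also have "\<dots> = (\<Sum>i\<in>UNIV - {t}. x$i*z$i) - x$t*z$t"
    by (subst sum.remove[of UNIV t]) auto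
  finally show ?thesis unfolding mink_def ..
qed

lemma abs_mink_le: "\<bar>mink t x y\<bar> \<le> norm x * norm y"
proof -
  have "norm (time_reflect t y) = norm y"
    unfolding norm_vec_def L2_set_def
      by (rule arg_cong[where f = sqrt], rule sum.cong) (auto simp: time_reflect_def)
  thus ?thesis unfolding mink_time_reflect using Cauchy_Schwarz_ineq2[of x "time_reflect t y"]
    by simp
qed

lemma tendsto_mink [tendsto_intros]:
  assumes "(f \<longlongrightarrow> a) F" "(g \<longlongrightarrow> b) F"
  shows "((\<lambda>k. mink t (f k) (g k)) \<longlongrightarrow> mink t a b) F"
  unfolding mink_def by (intro tendsto_intros tendsto_vec_nth assms)

lemma continuous_on_mink [continuous_intros]:
  assumes "continuous_on S f" "continuous_on S g"
  shows "continuous_on S (\<lambda>k. mink t (f k) (g k))"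
  unfolding mink_def by (intro continuous_intros continuous_on_component assms)

lemma closed_hyp: "closed (hyp t)"
proof -
  have "x$t \<noteq> 0" if "mink t x x = -1" for x
  proof
    assume "x$t = 0"
    with that have "(norm (space_part t x))^2 = -1" by (simp add: mink_self_space_part)
    thus False by (smt (verit) zero_le_power2)
  qed
  hence "hyp t = {x. mink t x x = -1} \<inter> {x. x$t \<ge> 0}"
    by (auto simp: hyp_def order_le_less)
  moreover have "closed {x. mink t x x = -1}"
    by (intro closed_Collect_eq continuous_on_mink continuous_on_id continuous_on_const)
  moreover have "closed {x::real^'a. x$t \<ge> 0}"
    by (intro closed_Collect_le continuous_on_component continuous_on_id continuous_on_const)
  ultimately show ?thesis by auto
qed

lemma closed_hplane: "closed (hplane t w)"
proof -
  have "hplane t w = hyp t \<inter> {x. mink t x w = 0}" by (auto simp: hplane_def)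
  moreover have "closed {x. mink t x w = 0}"
    by (intro closed_Collect_eq continuous_on_mink continuous_on_id continuous_on_const)
  ultimately show ?thesis using closed_hyp by auto
qed

lemma mink_hyp_le_neg1:
  assumes "x \<in> hyp t" "y \<in> hyp t"
  shows "mink t x y \<le> -1"
proof -
  define X where "X = norm (space_part t x)"
  define Y where "Y = norm (space_part t y)"
  have X2: "(x$t)^2 = 1 + X^2" using hyp_norm_space_part[OF assms(1)] unfolding X_def by simp
  have Y2: "(y$t)^2 = 1 + Y^2" using hyp_norm_space_part[OF assms(2)] unfolding Y_def by simp
  have pos: "x$t > 0" "y$t > 0" using assms by (auto simp: hyp_def)
  have cs: "space_part t x \<bullet> space_part t y \<le> X * Y"
    unfolding X_def Y_def by (rule norm_cauchy_schwarz)
  have e1: "(x$t * y$t)^2 = (1 + X^2) * (1 + Y^2)" unfolding power_mult_distrib X2 Y2 ..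
  have e2: "(1 + X^2) * (1 + Y^2) = (1 + X*Y)^2 + (X - Y)^2"
    by (simp add: power2_eq_square algebra_simps)
  have "(1 + X*Y)^2 \<le> (x$t * y$t)^2" unfolding e1 e2 by simp
  moreover have "0 \<le> x$t * y$t" using pos by simp
  ultimately have "1 + X*Y \<le> x$t * y$t" by (rule power2_le_imp_le)
  thus ?thesis using cs unfolding mink_space_part by linarith
qed

lemma timelike_time_pos:
  assumes x: "x \<in> hyp t" and a: "mink t a a < 0" and xa: "mink t x a < 0"
  shows "a$t > 0"
proof (rule ccontr)
  assume neg: "\<not> a$t > 0"
  define X where "X = norm (space_part t x)"
  define A where "A = norm (space_part t a)"
  have X0: "0 \<le> X" "0 \<le> A" unfolding X_def A_def by simp_all
  have X2: "X^2 = (x$t)^2 - 1" using hyp_norm_space_part[OF x] unfolding X_def by simp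
  have A2: "A^2 < (a$t)^2" using a unfolding mink_self_space_part A_def by simp
  have xt: "x$t > 0" using x by (simp add: hyp_def)
  have "X^2 < (x$t)^2" using X2 by simp
  hence Xl: "X < x$t" using xt power2_less_imp_less less_imp_le by blast
  have "A^2 < \<bar>a$t\<bar>^2" using A2 by simp
  hence Al: "A < \<bar>a$t\<bar>" using power2_less_imp_less abs_ge_zero by blast
  have cs0: "\<bar>space_part t x \<bullet> space_part t a\<bar> \<le> X * A" unfolding X_def A_def
    by (rule Cauchy_Schwarz_ineq2)
  hence cs: "- (X * A) \<le> space_part t x \<bullet> space_part t a" by linarith
  have "X * A < x$t * \<bar>a$t\<bar>"
    using Xl Al X0 by (intro mult_strict_mono') simp_all
  moreover have "\<bar>a$t\<bar> = - (a$t)" using neg by simp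
  ultimately have "mink t x a > 0" using cs unfolding mink_space_part by simp
  with xa show False by simp
qed

lemma orthogonal_hyp_imp_spacelike:
  assumes x: "x \<in> hyp t" and z: "z \<noteq> 0" and xz: "mink t x z = 0"
  shows "mink t z z > 0"
proof -
  define X where "X = norm (space_part t x)"
  define Z where "Z = norm (space_part t z)"
  have X2: "X^2 = (x$t)^2 - 1" using hyp_norm_space_part[OF x] unfolding X_def by simp
  have xt: "x$t > 0" using x by (simp add: hyp_def)
  have eq: "space_part t x \<bullet> space_part t z = x$t * z$t" using xz unfolding mink_space_part
    by simp
  have "\<bar>x$t * z$t\<bar> \<le> X * Z"
    using Cauchy_Schwarz_ineq2[of "space_part t x" "space_part t z"]
    unfolding eq X_def Z_def .
  hence "\<bar>x$t * z$t\<bar>^2 \<le> (X * Z)^2" by (intro power_mono) simp_all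
  hence cs: "(x$t)^2 * (z$t)^2 \<le> ((x$t)^2 - 1) * Z^2"
    unfolding power2_abs power_mult_distrib X2 .
  show ?thesis
  proof (cases "Z = 0")
    case True
    hence "(x$t)^2 * (z$t)^2 \<le> 0" using cs by simp
    hence "z$t = 0" using xt by (simp add: mult_le_0_iff)
    moreover have "space_part t z = 0" using True Z_def by simp
    ultimately have "z = 0"
    proof (intro vec_eq_iff[THEN iffD2] allI)
      fix i
      assume zt: "z$t = 0" and s0: "space_part t z = 0"
      have "space_part t z $ i = 0" using s0 by simp
      thus "z$i = 0$i" using zt by (cases "i = t") (simp_all add: space_part_def)
    qed
    with z show ?thesis by simp
  next
    case False
    hence Zp: "Z^2 > 0" by (simp add: Z_def)
    have "((x$t)^2 - 1) * Z^2 = (x$t)^2 * Z^2 - Z^2" by (simp add: algebra_simps)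
    hence "(x$t)^2 * (z$t)^2 < (x$t)^2 * Z^2" using cs Zp by linarith
    hence "(z$t)^2 < Z^2" using xt by simp
    thus ?thesis unfolding mink_self_space_part Z_def by simp
  qed
qed

lemma norm_unit_normal_le:
  assumes x: "x \<in> hyp t" and xw: "mink t x w = 0" and ww: "mink t w w = 1"
  shows "norm w \<le> 2 * norm x"
proof -
  define X where "X = norm (space_part t x)"
  define W where "W = norm (space_part t w)"
  have X2: "X^2 = (x$t)^2 - 1" using hyp_norm_space_part[OF x] unfolding X_def by simp
  have W2: "W^2 = 1 + (w$t)^2" using ww unfolding mink_self_space_part W_def by simp
  have eq: "space_part t x \<bullet> space_part t w = x$t * w$t" using xw unfolding mink_space_part
    by simp
  have "\<bar>x$t * w$t\<bar> \<le> X * W"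
    using Cauchy_Schwarz_ineq2[of "space_part t x" "space_part t w"]
    unfolding eq X_def W_def .
  hence "\<bar>x$t * w$t\<bar>^2 \<le> (X * W)^2" by (intro power_mono) simp_all
  hence "(x$t)^2 * (w$t)^2 \<le> ((x$t)^2 - 1) * (1 + (w$t)^2)"
    unfolding power2_abs power_mult_distrib X2 W2 .
  moreover have "((x$t)^2 - 1) * (1 + (w$t)^2) = (x$t)^2 * (w$t)^2 + ((x$t)^2 - 1 - (w$t)^2)"
    by (simp add: algebra_simps)
  ultimately have wt: "(w$t)^2 \<le> (x$t)^2 - 1" by linarith
  have "(norm w)^2 = W^2 + (w$t)^2" using norm_power2_space_part[of w t] unfolding W_def .
  also have "\<dots> \<le> 2 * (x$t)^2" using W2 wt by simp
  also have "\<dots> \<le> 2 * (norm x)^2" using norm_power2_space_part[of x t] by simp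
  also have "\<dots> \<le> (2 * norm x)^2" by (simp add: power2_eq_square)
  finally show ?thesis by (rule power2_le_imp_le) simp
qed

definition hyp_normalize :: "'n::finite \<Rightarrow> real^'n \<Rightarrow> real^'n" where
  "hyp_normalize t a = (1 / sqrt (- mink t a a)) *\<^sub>R a"

lemma mink_hyp_normalize_left: "mink t (hyp_normalize t a) w = (1 / sqrt (- mink t a a)) * mink t a w"
  unfolding hyp_normalize_def mink_scale_left ..

lemma hyp_normalize_in_hyp:
  assumes "mink t a a < 0" "a$t > 0"
  shows "hyp_normalize t a \<in> hyp t"
proof -
  have s: "sqrt (- mink t a a) > 0" using assms by simp
  have "mink t (hyp_normalize t a) (hyp_normalize t a) = (1 / sqrt (- mink t a a)) * (1 / sqrt (- mink t a a)) * mink t a a"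
    unfolding hyp_normalize_def mink_scale_left mink_scale_right by simp
  also have "\<dots> = mink t a a / (sqrt (- mink t a a))^2" by (simp add: power2_eq_square)
  also have "\<dots> = -1" using assms(1) by simp
  finally have "mink t (hyp_normalize t a) (hyp_normalize t a) = -1" .
  moreover have "hyp_normalize t a $ t > 0" using s assms unfolding hyp_normalize_def by simp
  ultimately show ?thesis by (simp add: hyp_def)
qed

lemma sgn_mink_hyp_normalize:
  assumes "mink t a a < 0"
  shows "sgn (mink t (hyp_normalize t a) w) = sgn (mink t a w)"
  using assms by (simp add: mink_hyp_normalize_left sgn_mult)

lemma continuous_on_hyp_normalize:
  assumes "continuous_on S g" "\<And>x. x \<in> S \<Longrightarrow> mink t (g x) (g x) < 0"
  shows "continuous_on S (\<lambda>x. hyp_normalize t (g x))"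
  unfolding hyp_normalize_def
  by (intro continuous_intros assms) (use assms(2) in force)+

lemma chord_timelike:
  assumes "x \<in> hyp t" "y \<in> hyp t" "0 \<le> s" "s \<le> 1"
  shows "mink t ((1-s) *\<^sub>R x + s *\<^sub>R y) ((1-s) *\<^sub>R x + s *\<^sub>R y) \<le> -1"
    and "((1-s) *\<^sub>R x + s *\<^sub>R y) $ t > 0"
proof -
  have xy: "mink t x y \<le> -1" by (rule mink_hyp_le_neg1[OF assms(1,2)])
  have xx: "mink t x x = -1" and yy: "mink t y y = -1" using assms by (auto simp: hyp_def)
  have ps: "0 \<le> 2 * (1 - s) * s" using assms by simp
  have "2 * (1 - s) * s*mink t x y \<le> 2 * (1 - s) * s*(-1)" using mult_left_mono[OF xy ps] .
  moreover have "mink t ((1-s) *\<^sub>R x + s *\<^sub>R y) ((1-s) *\<^sub>R x + s *\<^sub>R y)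
      = - ((1 - s) * (1 - s)) + 2 * (1 - s) * s*mink t x y - s * s"
    unfolding mink_lincomb_self xx yy by simp
  moreover have "- ((1 - s) * (1 - s)) + 2 * (1 - s) * s*(-1) - s * s = (-1::real)"
    by (simp add: algebra_simps)
  ultimately show "mink t ((1-s) *\<^sub>R x + s *\<^sub>R y) ((1-s) *\<^sub>R x + s *\<^sub>R y) \<le> -1" by linarith
  have "x$t > 0" "y$t > 0" using assms by (auto simp: hyp_def)
  hence "0 \<le> (1-s) * x$t" "0 \<le> s * y$t" using assms(3,4) by simp_all
  moreover have "0 < (1-s) * x$t \<or> 0 < s * y$t"
  proof (cases "s = 0")
    case True thus ?thesis using \<open>x$t > 0\<close> by simp
  next
    case False thus ?thesis using \<open>y$t > 0\<close> assms(3) by simp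
  qed
  ultimately show "((1-s) *\<^sub>R x + s *\<^sub>R y) $ t > 0" by simp linarith
qed

text \<open>Radial projection of the segment from x to y onto H^d, a parametrisation of
  the geodesic segment between them.\<close>

definition chord :: "'n::finite \<Rightarrow> real^'n \<Rightarrow> real^'n \<Rightarrow> real \<Rightarrow> real^'n" where
  "chord t x y s = hyp_normalize t ((1-s) *\<^sub>R x + s *\<^sub>R y)"

lemma chord_timelike_neg:
  assumes "x \<in> hyp t" "y \<in> hyp t" "s \<in> {0..1}"
  shows "mink t ((1-s) *\<^sub>R x + s *\<^sub>R y) ((1-s) *\<^sub>R x + s *\<^sub>R y) < 0"
  using chord_timelike(1)[of x t y s] assms by force

lemma chord_in_hyp:
  assumes "x \<in> hyp t" "y \<in> hyp t" "s \<in> {0..1}"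
  shows "chord t x y s \<in> hyp t"
  unfolding chord_def using assms chord_timelike(2)[of x t y s] chord_timelike_neg[OF assms]
  by (intro hyp_normalize_in_hyp) auto

lemma sgn_mink_chord:
  assumes "x \<in> hyp t" "y \<in> hyp t" "s \<in> {0..1}"
  shows "sgn (mink t (chord t x y s) w) = sgn ((1-s) * mink t x w + s * mink t y w)"
  unfolding chord_def sgn_mink_hyp_normalize[OF chord_timelike_neg[OF assms]]
  by (simp add: mink_add_left mink_scale_left)

lemma mink_chord_eq_0_iff:
  assumes "x \<in> hyp t" "y \<in> hyp t" "s \<in> {0..1}"
  shows "mink t (chord t x y s) w = 0 \<longleftrightarrow> (1-s) * mink t x w + s * mink t y w = 0"
  using sgn_mink_chord[OF assms, of w] by (metis sgn_0_0 sgn_zero_iff)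

lemma continuous_on_chord:
  assumes "x \<in> hyp t" "y \<in> hyp t"
  shows "continuous_on {0..1} (chord t x y)"
  unfolding chord_def
  by (rule continuous_on_hyp_normalize) (intro continuous_intros, use chord_timelike_neg[OF assms] in blast)

lemma compact_chord_image:
  assumes "x \<in> hyp t" "y \<in> hyp t"
  shows "compact (chord t x y ` {0..1})" "chord t x y ` {0..1} \<subseteq> hyp t"
  using compact_continuous_image[OF continuous_on_chord[OF assms] compact_Icc]
    chord_in_hyp[OF assms] by auto

lemma convex_comb_zero_exists:
  fixes a b :: real
  assumes "sgn a \<noteq> sgn b"
  shows "\<exists>s\<in>{0..1}. (1 - s) * a + s * b = 0"
proof (cases "a = 0")
  case True thus ?thesis by (intro bexI[of _ 0]) auto
next
  case a: False
  show ?thesis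
  proof (cases "b = 0")
    case True thus ?thesis by (intro bexI[of _ 1]) auto
  next
    case b: False
    have opp: "(a > 0 \<and> b < 0) \<or> (a < 0 \<and> b > 0)" using a b assms
      by (auto simp: sgn_if split: if_splits)
    hence ab: "a - b \<noteq> 0" by auto
    define s where "s = a / (a - b)"
    have "0 \<le> s \<and> s \<le> 1" using opp unfolding s_def
      by (auto simp: divide_simps)
    moreover have "(1 - s) * a + s * b = 0" unfolding s_def using ab
      by (simp add: field_simps)
    ultimately show ?thesis by auto
  qed
qed

lemma chord_in_hplane_iff:
  assumes "x \<in> hyp t" "y \<in> hyp t" "s \<in> {0..1}"
  shows "chord t x y s \<in> hplane t w \<longleftrightarrow> (1 - s) * mink t x w + s * mink t y w = 0"
  using chord_in_hyp[OF assms] mink_chord_eq_0_iff[OF assms] by (simp add: hplane_def)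

lemma chord_crosses_hplane:
  assumes x: "x \<in> hyp t" and y: "y \<in> hyp t" and sg: "sgn (mink t x w) \<noteq> sgn (mink t y w)"
  obtains s where "s \<in> {0..1}" "chord t x y s \<in> hplane t w"
proof -
  obtain s where "s \<in> {0..1}" "(1 - s) * mink t x w + s * mink t y w = 0"
    using convex_comb_zero_exists[OF sg] by blast
  thus ?thesis using that chord_in_hplane_iff[OF x y] by blast
qed

lemma chord_in_hplane:
  assumes "x \<in> hplane t q" "y \<in> hplane t q" "s \<in> {0..1}"
  shows "chord t x y s \<in> hplane t q"
  using assms chord_in_hplane_iff[of x t y s q] by (simp add: hplane_def)

lemma compact_chord_fan:
  assumes x: "x \<in> hyp t" and K: "compact K" "K \<subseteq> hyp t"
  shows "compact ((\<lambda>(s, k). chord t x k s) ` ({0..1} \<times> K))"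
    and "(\<lambda>(s, k). chord t x k s) ` ({0..1} \<times> K) \<subseteq> hyp t"
proof -
  have "continuous_on ({0..1} \<times> K) (\<lambda>(s, k). chord t x k s)"
    unfolding chord_def case_prod_beta
    by (intro continuous_on_hyp_normalize continuous_intros)
      (use chord_timelike_neg[OF x] K(2) in \<open>auto simp: mem_Times_iff\<close>)
  thus "compact ((\<lambda>(s, k). chord t x k s) ` ({0..1} \<times> K))"
    by (rule compact_continuous_image[OF _ compact_Times[OF compact_Icc K(1)]])
  show "(\<lambda>(s, k). chord t x k s) ` ({0..1} \<times> K) \<subseteq> hyp t"
    using chord_in_hyp[OF x] K(2) by auto
qed

definition spacelike_normalize :: "'n::finite \<Rightarrow> real^'n \<Rightarrow> real^'n" where
  "spacelike_normalize t e = (1 / sqrt (mink t e e)) *\<^sub>R e"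

lemma mink_spacelike_normalize_left:
  "mink t (spacelike_normalize t e) z = mink t e z / sqrt (mink t e e)"
  unfolding spacelike_normalize_def mink_scale_left by simp

lemma mink_spacelike_normalize_self:
  "mink t e e > 0 \<Longrightarrow> mink t (spacelike_normalize t e) (spacelike_normalize t e) = 1"
  unfolding spacelike_normalize_def mink_scale_left mink_scale_right by (simp add: field_simps)

lemma unit_orthogonal_exists:
  assumes card: "CARD('n::finite) \<ge> 3" and y: "y \<in> hyp (t::'n)"
  obtains e where "mink t e y = 0" "mink t e w = 0" "mink t e e = 1"
proof -
  have "dim {time_reflect t y, time_reflect t w} \<le> card {time_reflect t y, time_reflect t w}"
    by (rule dim_le_card') simp
  also have "\<dots> \<le> 2" by (simp add: card_insert_le_m1)
  finally have "dim {time_reflect t y, time_reflect t w} < DIM(real^'n)" using card by simp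
  then obtain x where x0: "x \<noteq> 0"
    and orth: "\<And>z. z \<in> span {time_reflect t y, time_reflect t w} \<Longrightarrow> orthogonal x z"
    using orthogonal_to_subspace_exists by blast
  have xy: "mink t x y = 0" and xw: "mink t x w = 0"
    using orth[of "time_reflect t y"] orth[of "time_reflect t w"]
    by (simp_all add: span_base orthogonal_def mink_time_reflect)
  have "mink t x x > 0" by (rule orthogonal_hyp_imp_spacelike[OF y x0]) (simp add: mink_sym xy)
  hence "mink t (spacelike_normalize t x) (spacelike_normalize t x) = 1"
    by (rule mink_spacelike_normalize_self)
  moreover have "mink t (spacelike_normalize t x) y = 0" "mink t (spacelike_normalize t x) w = 0"
    by (simp_all add: mink_spacelike_normalize_left xy xw)
  ultimately show ?thesis using that by blast
qed

lemma mink_orthogonal_part: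
  assumes x: "x \<in> hyp t" and ww: "mink t w w = 1"
  shows "mink t (x - mink t x w *\<^sub>R w) (x - mink t x w *\<^sub>R w) = -1 - (mink t x w)^2"
    and "mink t x (x - mink t x w *\<^sub>R w) = -1 - (mink t x w)^2"
    and "mink t (x - mink t x w *\<^sub>R w) w = 0"
  using x ww
  by (simp_all add: hyp_def mink_diff_left mink_diff_right mink_scale_left mink_scale_right
      mink_sym[of t w x] power2_eq_square)

text \<open>The foot of the perpendicular from x to hplane t w.\<close>

definition hplane_proj :: "'n::finite \<Rightarrow> real^'n \<Rightarrow> real^'n \<Rightarrow> real^'n" where
  "hplane_proj t x w = hyp_normalize t (x - mink t x w *\<^sub>R w)"

lemma hplane_proj_in_hplane:
  assumes x: "x \<in> hyp t" and ww: "mink t w w = 1"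
  shows "hplane_proj t x w \<in> hplane t w"
proof -
  define a where "a = x - mink t x w *\<^sub>R w"
  have aa: "mink t a a < 0" and xa: "mink t x a < 0"
    using mink_orthogonal_part(1,2)[OF x ww] unfolding a_def by (smt (verit) zero_le_power2)+
  have "hplane_proj t x w \<in> hyp t"
    unfolding hplane_proj_def a_def[symmetric]
      by (rule hyp_normalize_in_hyp[OF aa timelike_time_pos[OF x aa xa]])
  moreover have "mink t (hplane_proj t x w) w = 0"
    using mink_orthogonal_part(3)[OF x ww] by (simp add: hplane_proj_def mink_hyp_normalize_left)
  ultimately show ?thesis by (simp add: hplane_def)
qed

lemma mink_hplane_proj_self:
  assumes x: "x \<in> hyp t" and ww: "mink t w w = 1"
  shows "mink t x (hplane_proj t x w) = - sqrt (1 + (mink t x w)^2)"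
proof -
  have p: "1 + (mink t x w)^2 > 0" by (simp add: add_pos_nonneg)
  have "mink t x (hplane_proj t x w) = - ((1 + (mink t x w)^2) / sqrt (1 + (mink t x w)^2))"
    unfolding hplane_proj_def hyp_normalize_def mink_scale_right mink_orthogonal_part(1,2)[OF x ww]
    by (simp add: minus_divide_left)
  also have "\<dots> = - sqrt (1 + (mink t x w)^2)" using p by (simp add: real_div_sqrt)
  finally show ?thesis .
qed

lemma tendsto_hplane_proj:
  assumes x: "x \<in> hyp t" and xq: "mink t x q = 0" and lim: "(f \<longlongrightarrow> q) F"
  shows "((\<lambda>k. hplane_proj t x (f k)) \<longlongrightarrow> x) F"
proof -
  have xx: "mink t x x = -1" using x by (simp add: hyp_def)
  have a: "((\<lambda>k. x - mink t x (f k) *\<^sub>R f k) \<longlongrightarrow> x - mink t x q *\<^sub>R q) F"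
    by (intro tendsto_intros lim)
  hence a': "((\<lambda>k. x - mink t x (f k) *\<^sub>R f k) \<longlongrightarrow> x) F" using xq
    by simp
  have "((\<lambda>k. (1 / sqrt (- mink t (x - mink t x (f k) *\<^sub>R f k) (x - mink t x (f k) *\<^sub>R f k)))
        *\<^sub>R (x - mink t x (f k) *\<^sub>R f k)) \<longlongrightarrow> (1 / sqrt (- mink t x x)) *\<^sub>R x) F"
    by (intro tendsto_intros a' tendsto_mink) (simp add: xx)
  thus ?thesis unfolding hplane_proj_def hyp_normalize_def using xx by simp
qed

lemma geodesic_in_hyp:
  assumes y: "y \<in> hyp t" and ey: "mink t e y = 0" and ee: "mink t e e = 1"
  shows "cosh s *\<^sub>R y + sinh s *\<^sub>R e \<in> hyp t"
proof -
  define a where "a = cosh s *\<^sub>R y + sinh s *\<^sub>R e"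
  have yy: "mink t y y = -1" using y by (simp add: hyp_def)
  have ye: "mink t y e = 0" using ey by (simp add: mink_sym)
  have aa: "mink t a a = -1"
  proof -
    have "mink t a a = cosh s * cosh s * (-1) + 2 * cosh s * sinh s * 0 + sinh s * sinh s * 1"
      unfolding a_def mink_lincomb_self yy ye ee ..
    also have "\<dots> = -1" using cosh_square_eq[of s] by (simp add: power2_eq_square)
    finally show ?thesis .
  qed
  have ya: "mink t y a = - cosh s"
    unfolding a_def mink_add_right mink_scale_right yy ye by simp
  have "a$t > 0" by (rule timelike_time_pos[OF y]) (use aa ya cosh_real_pos[of s] in auto)
  thus ?thesis using aa by (simp add: hyp_def a_def)
qed

definition hyp_base :: "'n::finite \<Rightarrow> real^'n" where
  "hyp_base t = (\<chi> i. if i = t then 1 else 0)"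

lemma hyp_base_in_hyp: "hyp_base t \<in> hyp t"
proof -
  have "space_part t (hyp_base t) = 0" by (simp add: space_part_def hyp_base_def vec_eq_iff)
  thus ?thesis unfolding hyp_def mink_space_part by (simp add: hyp_base_def)
qed

lemma hplane_proj_base: "mink t w w = 1 \<Longrightarrow> hplane_proj t (hyp_base t) w \<in> hplane t w"
  by (rule hplane_proj_in_hplane[OF hyp_base_in_hyp])

lemma hplane_neg: "hplane t (- w) = hplane t w"
  by (auto simp: hplane_def mink_neg_right)

lemma hplane_points_both_sides:
  assumes p: "p \<in> hplane t q" and qq: "mink t q q = 1" and ww: "mink t w w = 1"
    and pw: "mink t p w = 0" and ne: "w \<noteq> q" "w \<noteq> - q"
  obtains a b where "a \<in> hplane t q" "b \<in> hplane t q" "mink t a w < 0" "mink t b w > 0"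
proof -
  have ph: "p \<in> hyp t" and pq: "mink t p q = 0" using p by (auto simp: hplane_def)
  define c where "c = mink t w q"
  define e' where "e' = w - c *\<^sub>R q"
  have e'q: "mink t e' q = 0" unfolding e'_def c_def mink_diff_left mink_scale_left qq by simp
  have e'p: "mink t e' p = 0"
    unfolding e'_def mink_diff_left mink_scale_left using pw pq by (simp add: mink_sym)
  have "e' \<noteq> 0"
  proof
    assume "e' = 0"
    hence w: "w = c *\<^sub>R q" unfolding e'_def by simp
    hence "c * c = 1" using ww qq by (simp add: mink_scale_left mink_scale_right)
    hence "c = 1 \<or> c = -1" using square_eq_1_iff by blast
    thus False using w ne by auto
  qed
  hence pos: "mink t e' e' > 0"
    by (rule orthogonal_hyp_imp_spacelike[OF ph]) (simp add: mink_sym e'p)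
  define e where "e = spacelike_normalize t e'"
  have ee: "mink t e e = 1" unfolding e_def by (rule mink_spacelike_normalize_self[OF pos])
  have e: "mink t e z = mink t e' z / sqrt (mink t e' e')" for z
    unfolding e_def by (rule mink_spacelike_normalize_left)
  have "mink t e' w = mink t e' e'"
    unfolding e'_def mink_diff_right mink_scale_right
    using e'q by (simp add: e'_def[symmetric])
  hence ew: "mink t e w = sqrt (mink t e' e')" using pos by (simp add: e real_div_sqrt)
  have ep: "mink t e p = 0" and eq: "mink t e q = 0" using e'p e'q by (simp_all add: e)
  have geo: "cosh s *\<^sub>R p + sinh s *\<^sub>R e \<in> hplane t q" for s
    using geodesic_in_hyp[OF ph ep ee] by (simp add: hplane_def mink_geodesic pq eq)
  have side: "mink t (cosh s *\<^sub>R p + sinh s *\<^sub>R e) w = sinh s * sqrt (mink t e' e')" for s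
    unfolding mink_geodesic pw ew by simp
  show ?thesis
  proof (rule that[OF geo geo])
    show "mink t (cosh (-1) *\<^sub>R p + sinh (-1) *\<^sub>R e) w < 0"
      unfolding side using pos by (simp add: mult_neg_pos)
    show "mink t (cosh 1 *\<^sub>R p + sinh 1 *\<^sub>R e) w > 0"
      unfolding side using pos by simp
  qed
qed

lemma hplane_subset_imp_normal:
  assumes ww: "mink t w w = 1" and w'w': "mink t w' w' = 1" and sub: "hplane t w \<subseteq> hplane t w'"
  shows "w' = w \<or> w' = - w"
proof (rule ccontr)
  assume ne: "\<not> (w' = w \<or> w' = - w)"
  have y: "hplane_proj t (hyp_base t) w \<in> hplane t w" by (rule hplane_proj_base[OF ww])
  hence "mink t (hplane_proj t (hyp_base t) w) w' = 0" using sub by (auto simp: hplane_def)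
  then obtain a where "a \<in> hplane t w" "mink t a w' < 0"
    using hplane_points_both_sides[OF y ww w'w'] ne by metis
  thus False using sub by (auto simp: hplane_def)
qed

lemma unit_tangent_towards:
  assumes card: "CARD('n::finite) \<ge> 3" and y: "y \<in> hyp (t::'n)"
    and yw: "mink t y w = 0" and zw: "mink t z w = 0" and z0: "z \<noteq> 0"
  obtains e where "mink t e y = 0" "mink t e w = 0" "mink t e e = 1"
    "mink t e z \<ge> 0" "mink t y z \<noteq> 0 \<or> mink t e z > 0"
proof -
  have yy: "mink t y y = -1" using y by (simp add: hyp_def)
  define a where "a = mink t y z"
  define e' where "e' = z + a *\<^sub>R y"
  have e'y: "mink t e' y = 0"
    unfolding e'_def mink_add_left mink_scale_left yy a_def by (simp add: mink_sym)
  have e'w: "mink t e' w = 0" unfolding e'_def mink_add_left mink_scale_left zw yw by simp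
  show ?thesis
  proof (cases "e' = 0")
    case False
    have pos: "mink t e' e' > 0"
      by (rule orthogonal_hyp_imp_spacelike[OF y False]) (simp add: mink_sym e'y)
    define e where "e = spacelike_normalize t e'"
    have ee: "mink t e e = 1" unfolding e_def by (rule mink_spacelike_normalize_self[OF pos])
    have e: "mink t e u = mink t e' u / sqrt (mink t e' e')" for u
      unfolding e_def by (rule mink_spacelike_normalize_left)
    have "mink t e' z = mink t e' e'"
      unfolding e'_def mink_add_right mink_scale_right
      using e'y by (simp add: e'_def[symmetric])
    hence "mink t e z > 0" using pos by (simp add: e)
    thus ?thesis using that[OF _ _ ee] e'y e'w by (simp add: e)
  next
    case True
    hence z: "z = - (a *\<^sub>R y)" unfolding e'_def by (simp add: add_eq_0_iff)
    hence "a \<noteq> 0" using z0 by auto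
    obtain e where ey: "mink t e y = 0" and ew: "mink t e w = 0" and ee: "mink t e e = 1"
      using unit_orthogonal_exists[OF card y] .
    have "mink t e z = 0" unfolding z mink_neg_right mink_scale_right ey by simp
    thus ?thesis using that[OF ey ew ee] \<open>a \<noteq> 0\<close> by (simp add: a_def)
  qed
qed

lemma mink_unbounded_on_hplane:
  assumes card: "CARD('n::finite) \<ge> 3" and ww: "mink t w w = 1"
    and zw: "mink t z w = 0" and z0: "z \<noteq> 0"
  obtains y where "y \<in> hplane (t::'n) w" "\<bar>mink t y z\<bar> > M"
proof -
  define y0 where "y0 = hplane_proj t (hyp_base t) w"
  have "y0 \<in> hplane t w" unfolding y0_def by (rule hplane_proj_base[OF ww])
  hence y0: "y0 \<in> hyp t" and y0w: "mink t y0 w = 0" by (auto simp: hplane_def)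
  obtain e where ey: "mink t e y0 = 0" and ew: "mink t e w = 0" and ee: "mink t e e = 1"
    and ez: "mink t e z \<ge> 0" and nz: "mink t y0 z \<noteq> 0 \<or> mink t e z > 0"
    using unit_tangent_towards[OF card y0 y0w zw z0] .
  define a where "a = mink t y0 z"
  define b where "b = mink t e z"
  have ab: "\<bar>a\<bar> + b > 0" using nz ez unfolding a_def b_def by auto
  define \<sigma> :: real where "\<sigma> = (if a \<ge> 0 then 1 else -1)"
  define r where "r = arsinh ((\<bar>M\<bar> + 1) / (\<bar>a\<bar> + b))"
  define y where "y = cosh (\<sigma> * r) *\<^sub>R y0 + sinh (\<sigma> * r) *\<^sub>R e"
  have "y \<in> hplane t w"
    using geodesic_in_hyp[OF y0 ey ee] unfolding y_def
      by (simp add: hplane_def mink_geodesic y0w ew)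
  moreover have "\<bar>mink t y z\<bar> > M"
  proof -
    have shr: "(\<bar>a\<bar> + b) * sinh r = \<bar>M\<bar> + 1" using ab unfolding r_def by simp
    have "\<sigma> * mink t y z = \<bar>a\<bar> * cosh r + b * sinh r"
      unfolding y_def mink_geodesic a_def[symmetric] b_def[symmetric] \<sigma>_def by auto
    also have "\<dots> \<ge> \<bar>a\<bar> * sinh r + b * sinh r"
      using sinh_le_cosh_real[of r] by (simp add: mult_left_mono)
    finally have "\<sigma> * mink t y z \<ge> \<bar>M\<bar> + 1" using shr
      by (simp add: algebra_simps)
    moreover have "\<sigma> * mink t y z \<le> \<bar>mink t y z\<bar>" unfolding \<sigma>_def
      by auto
    ultimately show ?thesis by linarith
  qed
  ultimately show ?thesis using that by blast
qed

lemma inj_seq_avoids_finite: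
  assumes "inj (g :: nat \<Rightarrow> 'a)" "finite A"
  obtains k where "k \<ge> N" "g k \<notin> A"
proof -
  have "finite (g -` A)" using assms by (simp add: finite_vimageI)
  then obtain m where m: "g -` A \<subseteq> {..<m}" using finite_nat_bounded by blast
  have "max N m \<notin> g -` A" using m by auto
  thus ?thesis using that[of "max N m"] by simp
qed

lemma affine_zero_unique:
  fixes a b s s' :: real
  assumes "a \<noteq> 0" "(1 - s) * a + s * b = 0" "(1 - s') * a + s' * b = 0"
  shows "s = s'"
proof -
  have "a - b \<noteq> 0" using assms by (auto simp: algebra_simps)
  moreover have "s * (a - b) = s' * (a - b)" using assms(2,3) by (simp add: algebra_simps)
  ultimately show ?thesis by simp
qed

text \<open>Among finitely many affine functions on [0, 1], nonzero at 0 and each with a zero,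
  take a first zero ss: no other function changes sign on [0, ss] without vanishing at ss.\<close>

lemma first_sign_change:
  fixes a b :: "'a \<Rightarrow> real"
  assumes fin: "finite {w \<in> P. \<exists>s\<in>{0..1}. (1 - s) * a w + s * b w = 0}"
    and w0: "w0 \<in> P" "s0 \<in> {0..1}" "(1 - s0) * a w0 + s0 * b w0 = 0"
    and nz: "\<And>w. w \<in> P \<Longrightarrow> a w \<noteq> 0"
  obtains ws ss where "ws \<in> P" "ss \<in> {0<..1}" "(1 - ss) * a ws + ss * b ws = 0"
    "\<And>w. w \<in> P \<Longrightarrow> (1 - ss) * a w + ss * b w \<noteq> 0 \<Longrightarrow>
       sgn (a w) = sgn ((1 - ss) * a w + ss * b w)"
proof -
  define l where "l w s = (1 - s) * a w + s * b w" for w s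
  define Z where "Z = {w \<in> P. \<exists>s\<in>{0..1}. l w s = 0}"
  define root where "root w = (SOME s. s \<in> {0..1} \<and> l w s = 0)" for w
  have root: "root w \<in> {0..1}" "l w (root w) = 0" if "w \<in> Z" for w
  proof -
    have "\<exists>s. s \<in> {0..1} \<and> l w s = 0" using that unfolding Z_def by blast
    hence "root w \<in> {0..1} \<and> l w (root w) = 0" unfolding root_def by (rule someI_ex)
    thus "root w \<in> {0..1}" "l w (root w) = 0" by simp_all
  qed
  have root_unique: "s = root w" if w: "w \<in> Z" and s: "l w s = 0" for w s
    using affine_zero_unique[of "a w" s "b w" "root w"] w nz s root(2)[OF w]
    unfolding Z_def l_def by blast
  have root_pos: "root w > 0" if "w \<in> Z" for w
    using root[OF that] nz that unfolding Z_def l_def by (cases "root w = 0") auto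
  have "finite Z" using fin unfolding Z_def l_def .
  have "w0 \<in> Z" using w0 unfolding Z_def l_def by blast
  hence "Z \<noteq> {}" by blast
  define ss where "ss = Min (root ` Z)"
  have ss_le: "ss \<le> root w" if "w \<in> Z" for w
    unfolding ss_def using \<open>finite Z\<close> that by simp
  have "ss \<in> root ` Z" unfolding ss_def
    using \<open>finite Z\<close> \<open>Z \<noteq> {}\<close> by simp
  then obtain ws where ws: "ws \<in> Z" "root ws = ss" by blast
  have ss: "ss \<in> {0<..1}" using root[OF ws(1)] root_pos[OF ws(1)] ws(2) by auto
  show ?thesis
  proof (rule that)
    show "ws \<in> P" "ss \<in> {0<..1}" "(1 - ss) * a ws + ss * b ws = 0"
      using ws root[OF ws(1)] ss unfolding Z_def l_def by auto
    fix w assume w: "w \<in> P" and nzss: "(1 - ss) * a w + ss * b w \<noteq> 0"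
    show "sgn (a w) = sgn ((1 - ss) * a w + ss * b w)"
    proof (rule ccontr)
      assume "sgn (a w) \<noteq> sgn ((1 - ss) * a w + ss * b w)"
      then obtain th where th: "th \<in> {0..1}" and "(1 - th) * a w + th * l w ss = 0"
        using convex_comb_zero_exists unfolding l_def by blast
      hence zero: "l w (th * ss) = 0" by (simp add: l_def algebra_simps)
      have "th * ss \<in> {0..1}" using th ss by (auto simp: mult_le_one)
      hence "w \<in> Z" unfolding Z_def using w zero by blast
      hence "ss \<le> th * ss" using root_unique[OF _ zero] ss_le by simp
      moreover have "th * ss \<le> ss" using th ss by (simp add: mult_le_cancel_right1)
      ultimately have "th * ss = ss" by simp
      hence "l w ss = 0" using zero by metis
      thus False using nzss by (simp add: l_def)
    qed
  qed
qed

section \<open>The walls\<close>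

locale wall_system =
  fixes t :: "'n::finite" and G :: "(real^'n^'n) set" and n :: nat and v :: "nat \<Rightarrow> real^'n"
  assumes card3: "CARD('n) \<ge> 3"
    and lat: "cocompact_lattice t G"
    and orient: "orientation_preserving G"
    and emb: "\<forall>i<n. embedded_tg_hypersurface t G (v i)"
    and disj: "\<forall>i<n. \<forall>j<n. i \<noteq> j \<longrightarrow> disjoint_hypersurfaces t G (v i) (v j)"
begin

lemma lattice_O_plus: "A \<in> G \<Longrightarrow> A \<in> O_plus t"
  using lat by (auto simp: cocompact_lattice_def)

lemma lattice_mink: "A \<in> G \<Longrightarrow> mink t (A *v x) (A *v y) = mink t x y"
  using lattice_O_plus by (simp add: O_plus_def)

lemma lattice_hyp: "A \<in> G \<Longrightarrow> x \<in> hyp t \<Longrightarrow> A *v x \<in> hyp t"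
  using lattice_O_plus unfolding O_plus_def by blast

lemma lattice_one: "mat 1 \<in> G"
  using lat by (auto simp: cocompact_lattice_def)

lemma lattice_mult: "A \<in> G \<Longrightarrow> B \<in> G \<Longrightarrow> A ** B \<in> G"
  using lat by (auto simp: cocompact_lattice_def)

lemma lattice_inv: "A \<in> G \<Longrightarrow> matrix_inv A \<in> G"
  using lat by (auto simp: cocompact_lattice_def)

text \<open>Orientability is only used here: it makes matrix_inv, a choice, a genuine inverse.\<close>

lemma lattice_matrix_inv:
  assumes "A \<in> G"
  shows "A ** matrix_inv A = mat 1" "matrix_inv A ** A = mat 1"
proof -
  have "invertible A"
    using orient assms by (auto simp: orientation_preserving_def invertible_det_nz)
  hence "\<exists>A'. A ** A' = mat 1 \<and> A' ** A = mat 1" by (simp add: invertible_def)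
  hence "A ** matrix_inv A = mat 1 \<and> matrix_inv A ** A = mat 1"
    unfolding matrix_inv_def by (rule someI_ex)
  thus "A ** matrix_inv A = mat 1" "matrix_inv A ** A = mat 1" by simp_all
qed

lemma lattice_inv_cancel:
  assumes "A \<in> G"
  shows "A *v (matrix_inv A *v x) = x" "matrix_inv A *v (A *v x) = x"
  using lattice_matrix_inv[OF assms] by (simp_all add: matrix_vector_mul_assoc)

lemma inj_lattice_action: "A \<in> G \<Longrightarrow> inj ((*v) A)"
  by (metis lattice_inv_cancel(2) injI)

lemma countable_lattice: "countable G"
proof -
  define K where "K = (\<lambda>m::nat. hyp t \<inter> cball (hyp_base t) (real m))"
  have "compact (K m)" for m
    unfolding K_def by (rule closed_Int_compact[OF closed_hyp compact_cball])
  hence fin: "finite {A\<in>G. (\<lambda>x. A *v x) ` K m \<inter> K m \<noteq> {}}" for m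
    using lat unfolding cocompact_lattice_def K_def by auto
  have "G \<subseteq> (\<Union>m. {A\<in>G. (\<lambda>x. A *v x) ` K m \<inter> K m \<noteq> {}})"
  proof
    fix A assume A: "A \<in> G"
    obtain m :: nat where m: "dist (hyp_base t) (A *v hyp_base t) \<le> real m"
      using real_arch_simple by blast
    have "hyp_base t \<in> K m" "A *v hyp_base t \<in> K m"
      unfolding K_def using m lattice_hyp[OF A hyp_base_in_hyp] hyp_base_in_hyp by simp_all
    thus "A \<in> (\<Union>m. {A\<in>G. (\<lambda>x. A *v x) ` K m \<inter> K m \<noteq> {}})"
      using A by blast
  qed
  moreover have "countable (\<Union>m. {A\<in>G. (\<lambda>x. A *v x) ` K m \<inter> K m \<noteq> {}})"
    using fin by (intro countable_UN) (auto intro: countable_finite)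
  ultimately show ?thesis by (rule countable_subset)
qed

lemma compact_fundamental_set:
  obtains K where "compact K" "K \<subseteq> hyp t" "(\<Union>A\<in>G. (\<lambda>x. A *v x) ` K) = hyp t"
  using lat unfolding cocompact_lattice_def by (elim conjE exE) (rule that)

text \<open>The translate A (hplane t (v i)) is hplane t (A v i), with the two unit normals
  A v i and - A v i; normals i collects them for all lifts of the i-th hypersurface.\<close>

definition normals :: "nat \<Rightarrow> (real^'n) set" where
  "normals i = {s *\<^sub>R (A *v v i) | A s. A \<in> G \<and> (s = 1 \<or> s = -1)}"

lemma mink_v_self: "i < n \<Longrightarrow> mink t (v i) (v i) = 1"
  using emb by (auto simp: embedded_tg_hypersurface_def)

lemma normalsE:
  assumes "w \<in> normals i"
  obtains A s where "A \<in> G" "s = 1 \<or> s = -1" "w = s *\<^sub>R (A *v v i)"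
  using assms unfolding normals_def by blast

lemma mink_normal_self:
  assumes "i < n" "w \<in> normals i"
  shows "mink t w w = 1"
proof -
  obtain A s where A: "A \<in> G" and s: "s = 1 \<or> s = -1" and w: "w = s *\<^sub>R (A *v v i)"
    using assms(2) by (rule normalsE)
  have "mink t w w = s * s * mink t (v i) (v i)"
    unfolding w mink_scale_left mink_scale_right lattice_mink[OF A] by simp
  also have "\<dots> = 1" using s mink_v_self[OF assms(1)] by auto
  finally show ?thesis .
qed

lemma normal_nonzero: "i < n \<Longrightarrow> w \<in> normals i \<Longrightarrow> w \<noteq> 0"
  using mink_normal_self by fastforce

lemma v_in_normals: "v i \<in> normals i"
  unfolding normals_def
    by (rule CollectI, rule exI[of _ "mat 1"], rule exI[of _ 1]) (simp add: lattice_one)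

lemma neg_in_normals:
  assumes "w \<in> normals i"
  shows "- w \<in> normals i"
proof -
  obtain A s where A: "A \<in> G" and s: "s = 1 \<or> s = -1" and w: "w = s *\<^sub>R (A *v v i)"
    using assms by (rule normalsE)
  have "- w = (- s) *\<^sub>R (A *v v i)" unfolding w by simp
  moreover have "- s = 1 \<or> - s = -1" using s by auto
  ultimately show ?thesis unfolding normals_def using A by blast
qed

lemma lattice_normals:
  assumes AG: "A \<in> G" and "w \<in> normals i"
  shows "A *v w \<in> normals i"
proof -
  obtain B s where B: "B \<in> G" and s: "s = 1 \<or> s = -1" and w: "w = s *\<^sub>R (B *v v i)"
    using assms(2) by (rule normalsE)
  have "A *v w = s *\<^sub>R ((A ** B) *v v i)"
    unfolding w by (simp add: matrix_vector_mult_scaleR matrix_vector_mul_assoc)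
  moreover have "A ** B \<in> G" by (rule lattice_mult[OF AG B])
  ultimately show ?thesis unfolding normals_def using s by blast
qed

lemma hplane_lattice_action:
  assumes "A \<in> G"
  shows "(*v) A ` hplane t w = hplane t (A *v w)"
proof
  show "(*v) A ` hplane t w \<subseteq> hplane t (A *v w)"
    using assms by (auto simp: hplane_def lattice_mink lattice_hyp)
  show "hplane t (A *v w) \<subseteq> (*v) A ` hplane t w"
  proof
    fix y assume y: "y \<in> hplane t (A *v w)"
    define x where "x = matrix_inv A *v y"
    have yx: "y = A *v x" unfolding x_def using lattice_inv_cancel[OF assms] by simp
    have "x \<in> hyp t" unfolding x_def using y lattice_hyp[OF lattice_inv[OF assms]]
      by (auto simp: hplane_def)
    moreover have "mink t x w = 0" using y unfolding yx
      by (simp add: hplane_def lattice_mink[OF assms])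
    ultimately show "y \<in> (*v) A ` hplane t w" using yx by (auto simp: hplane_def)
  qed
qed

lemma hplane_normal_translate:
  assumes "w \<in> normals i"
  shows "\<exists>A\<in>G. hplane t w = (*v) A ` hplane t (v i)"
proof -
  obtain A s where A: "A \<in> G" and s: "s = 1 \<or> s = -1" and w: "w = s *\<^sub>R (A *v v i)"
    using assms by (rule normalsE)
  have "hplane t w = hplane t (A *v v i)" using s w by (auto simp: hplane_neg)
  also have "\<dots> = (*v) A ` hplane t (v i)" by (rule hplane_lattice_action[OF A, symmetric])
  finally show ?thesis using A by blast
qed

lemma walls_meet_imp_same:
  assumes i: "i < n" and j: "j < n" and w: "w \<in> normals i" and w': "w' \<in> normals j"
    and x: "x \<in> hplane t w" and x': "x \<in> hplane t w'"
  shows "i = j \<and> (w' = w \<or> w' = - w)"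
proof -
  obtain A where A: "A \<in> G" and hA: "hplane t w = (*v) A ` hplane t (v i)"
    using hplane_normal_translate[OF w] by blast
  obtain B where B: "B \<in> G" and hB: "hplane t w' = (*v) B ` hplane t (v j)"
    using hplane_normal_translate[OF w'] by blast
  obtain p where p: "p \<in> hplane t (v i)" and xp: "x = A *v p" using x hA by auto
  obtain p' where p': "p' \<in> hplane t (v j)" and xp': "x = B *v p'" using x' hB by auto
  define C where "C = matrix_inv B ** A"
  have C: "C \<in> G" unfolding C_def by (intro lattice_mult lattice_inv A B)
  have Cp: "C *v p = p'"
    unfolding C_def matrix_vector_mul_assoc[symmetric] xp[symmetric] xp' lattice_inv_cancel(2)[OF B] ..
  have meet: "(*v) C ` hplane t (v i) \<inter> hplane t (v j) \<noteq> {}" using p p' Cp by blast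
  have ij: "i = j"
  proof (rule ccontr)
    assume "i \<noteq> j"
    hence "disjoint_hypersurfaces t G (v i) (v j)" using disj i j by auto
    thus False using meet C unfolding disjoint_hypersurfaces_def by auto
  qed
  have e: "embedded_tg_hypersurface t G (v i)" using emb i by simp
  have ec: "(*v) C ` hplane t (v i) = hplane t (v i) \<or> (*v) C ` hplane t (v i) \<inter> hplane t (v i) = {}"
    using e C unfolding embedded_tg_hypersurface_def by blast
  have "(*v) C ` hplane t (v i) = hplane t (v i)" using ec meet ij by auto
  hence "hplane t w' = (*v) B ` ((*v) C ` hplane t (v i))" using hB ij by simp
  also have "\<dots> = (*v) (B ** C) ` hplane t (v i)"
    by (simp add: image_image matrix_vector_mul_assoc)
  also have "B ** C = A" unfolding C_def
    using lattice_matrix_inv[OF B] by (simp add: matrix_mul_assoc)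
  finally have "hplane t w' = hplane t w" using hA by simp
  hence "w' = w \<or> w' = - w"
    using hplane_subset_imp_normal[OF mink_normal_self[OF i w] mink_normal_self[OF j w']] by simp
  with ij show ?thesis by simp
qed

lemma normal_index_unique:
  assumes i: "i < n" and j: "j < n" and q: "q \<in> normals j" and x: "x \<in> hplane t q"
  shows "q \<in> normals i \<longleftrightarrow> i = j"
  using walls_meet_imp_same[OF i j _ q x x] q by blast

definition wall_union :: "nat \<Rightarrow> (real^'n) set" where
  "wall_union i = (\<Union>A\<in>G. (*v) A ` hplane t (v i))"

lemma closed_wall_union: "i < n \<Longrightarrow> closed (wall_union i)"
  using emb unfolding wall_union_def embedded_tg_hypersurface_def by blast

lemma wall_union_iff: "x \<in> wall_union i \<longleftrightarrow> (\<exists>w\<in>normals i. x \<in> hplane t w)"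
proof
  assume "x \<in> wall_union i"
  then obtain A where A: "A \<in> G" and x: "x \<in> (*v) A ` hplane t (v i)"
    unfolding wall_union_def by blast
  have "A *v v i \<in> normals i" by (rule lattice_normals[OF A v_in_normals])
  moreover have "x \<in> hplane t (A *v v i)" using x hplane_lattice_action[OF A] by simp
  ultimately show "\<exists>w\<in>normals i. x \<in> hplane t w" by blast
next
  assume "\<exists>w\<in>normals i. x \<in> hplane t w"
  then obtain w where w: "w \<in> normals i" and x: "x \<in> hplane t w" by blast
  obtain A where A: "A \<in> G" and h: "hplane t w = (*v) A ` hplane t (v i)"
    using hplane_normal_translate[OF w] by blast
  show "x \<in> wall_union i" unfolding wall_union_def using A h x by blast
qed

definition accumulates :: "nat \<Rightarrow> real^'n \<Rightarrow> bool" where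
  "accumulates i q \<longleftrightarrow> (\<forall>e>0. \<exists>w\<in>normals i. w \<noteq> q \<and> w \<noteq> - q \<and> norm (w - q) < e)"

lemma accumulates_neg:
  assumes "accumulates i q"
  shows "accumulates i (- q)"
  unfolding accumulates_def
proof (intro allI impI)
  fix e :: real assume "e > 0"
  then obtain w where "w \<in> normals i" "w \<noteq> q" "w \<noteq> - q" "norm (w - q) < e"
    using assms unfolding accumulates_def by blast
  thus "\<exists>w\<in>normals i. w \<noteq> - q \<and> w \<noteq> - (- q) \<and> norm (w - (- q)) < e"
    using neg_in_normals norm_minus_commute[of q w] by (intro bexI[of _ "- w"]) auto
qed

lemma accumulates_lattice_action:
  assumes A: "A \<in> G" and a: "accumulates i q"
  shows "accumulates i (A *v q)"
  unfolding accumulates_def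
proof (intro allI impI)
  fix e :: real assume e: "e > 0"
  obtain C where C: "C > 0" "\<And>x. norm (A *v x) \<le> norm x * C"
    using bounded_linear.pos_bounded[OF matrix_vector_mul_bounded_linear[of A]] by blast
  obtain w where w: "w \<in> normals i" "w \<noteq> q" "w \<noteq> - q" "norm (w - q) < e / C"
    using a e C unfolding accumulates_def by (meson divide_pos_pos)
  have "norm (A *v w - A *v q) = norm (A *v (w - q))" by (simp add: matrix_vector_mult_diff_distrib)
  also have "\<dots> \<le> norm (w - q) * C" by (rule C(2))
  also have "\<dots> < e" using w(4) C(1) by (simp add: pos_less_divide_eq)
  finally have "norm (A *v w - A *v q) < e" .
  moreover have "A *v w \<noteq> A *v q" "A *v w \<noteq> A *v (- q)"
    using w(2,3) inj_lattice_action[OF A] by (auto dest: injD)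
  moreover have "A *v (- q) = - (A *v q)" by (rule linear_neg[OF matrix_vector_mul_linear])
  ultimately show "\<exists>w\<in>normals i. w \<noteq> A *v q \<and> w \<noteq> - (A *v q) \<and> norm (w - A *v q) < e"
    using lattice_normals[OF A w(1)] by metis
qed

lemma accumulates_normal_iff:
  assumes q: "q \<in> normals i"
  shows "accumulates i q \<longleftrightarrow> accumulates i (v i)"
proof -
  have neg: "accumulates i (- x) \<longleftrightarrow> accumulates i x" for x
    using accumulates_neg[of i "- x"] accumulates_neg[of i x] by auto
  obtain A s where A: "A \<in> G" and s: "s = 1 \<or> s = -1" and qe: "q = s *\<^sub>R (A *v v i)"
    using q by (rule normalsE)
  have "accumulates i (matrix_inv A *v (A *v v i)) \<Longrightarrow> accumulates i (v i)"
    unfolding lattice_inv_cancel(2)[OF A] .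
  hence "accumulates i (A *v v i) \<longleftrightarrow> accumulates i (v i)"
    using accumulates_lattice_action[OF lattice_inv[OF A]] accumulates_lattice_action[OF A] by blast
  moreover have "q = A *v v i \<or> q = - (A *v v i)" using s qe by auto
  ultimately show ?thesis using neg by metis
qed

lemma countable_normals: "countable (normals i)"
proof (rule countable_subset)
  show "normals i \<subseteq> (\<lambda>A. A *v v i) ` G \<union> (\<lambda>A. - (A *v v i)) ` G"
    unfolding normals_def by auto
  show "countable ((\<lambda>A. A *v v i) ` G \<union> (\<lambda>A. - (A *v v i)) ` G)"
    using countable_lattice by simp
qed

lemma wall_union_subset_closure:
  assumes i: "i < n" and q: "q \<in> normals i" and a: "accumulates i q"
  shows "wall_union i \<subseteq> closure (wall_union i - hplane t q)"
proof
  fix r assume rU: "r \<in> wall_union i"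
  show "r \<in> closure (wall_union i - hplane t q)"
  proof (cases "r \<in> hplane t q")
    case False thus ?thesis using rU closure_subset by fastforce
  next
    case True
    have rh: "r \<in> hyp t" and rq: "mink t r q = 0" using True by (auto simp: hplane_def)
    have lim: "((\<lambda>w. hplane_proj t r w) \<longlongrightarrow> r) (at q)"
      by (rule tendsto_hplane_proj[OF rh rq tendsto_ident_at])
    show ?thesis unfolding closure_approachable
    proof (intro allI impI)
      fix e :: real assume "e > 0"
      then obtain d where d: "d > 0"
        and dd: "\<And>x. x \<noteq> q \<Longrightarrow> dist x q < d \<Longrightarrow> dist (hplane_proj t r x) r < e"
        using metric_LIM_D[OF lim] by metis
      obtain w where w: "w \<in> normals i" "w \<noteq> q" "w \<noteq> - q" "norm (w - q) < d"
        using a d unfolding accumulates_def by blast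
      have z: "hplane_proj t r w \<in> hplane t w"
        by (rule hplane_proj_in_hplane[OF rh mink_normal_self[OF i w(1)]])
      hence "hplane_proj t r w \<in> wall_union i" unfolding wall_union_iff using w(1) by blast
      moreover have "hplane_proj t r w \<notin> hplane t q"
        using walls_meet_imp_same[OF i i w(1) q z] w(2,3) by auto
      moreover have "dist (hplane_proj t r w) r < e" using dd w(2,4) by (simp add: dist_norm)
      ultimately show "\<exists>y\<in>wall_union i - hplane t q. dist y r < e" by blast
    qed
  qed
qed

text \<open>By Baire's theorem the closed set wall_union i, a countable union of its walls,
  cannot have every wall in the closure of the other walls.\<close>

lemma not_accumulates_v:
  assumes i: "i < n"
  shows "\<not> accumulates i (v i)"
proof
  assume a: "accumulates i (v i)"
  define S where "S = wall_union i"
  define GG where "GG = (\<lambda>q. S - hplane t q) ` normals i"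
  have "countable GG" unfolding GG_def using countable_normals by simp
  moreover have "closed S" unfolding S_def by (rule closed_wall_union[OF i])
  moreover have "openin (top_of_set S) T \<and> S \<subseteq> closure T" if "T \<in> GG" for T
  proof -
    obtain q where q: "q \<in> normals i" and T: "T = S - hplane t q"
      using \<open>T \<in> GG\<close> unfolding GG_def by blast
    have "openin (top_of_set S) (S - S \<inter> hplane t q)"
      by (intro openin_diff openin_subtopology_self closedin_closed_Int closed_hplane)
    moreover have "S - S \<inter> hplane t q = T" unfolding T by blast
    moreover have "S \<subseteq> closure T" unfolding S_def T
      using wall_union_subset_closure[OF i q] accumulates_normal_iff[OF q] a by blast
    ultimately show ?thesis by simp
  qed
  ultimately have "S \<subseteq> closure (\<Inter>GG)" by (intro Baire) auto
  moreover have "\<Inter>GG = {}"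
  proof -
    have "x \<notin> \<Inter>GG" for x
    proof (cases "x \<in> S")
      case True
      then obtain q where "q \<in> normals i" "x \<in> hplane t q" unfolding S_def wall_union_iff
        by blast
      thus ?thesis unfolding GG_def by blast
    next
      case False
      thus ?thesis using v_in_normals unfolding GG_def by blast
    qed
    thus ?thesis by blast
  qed
  moreover have "hplane_proj t (hyp_base t) (v i) \<in> S"
    unfolding S_def wall_union_iff using hplane_proj_base[OF mink_v_self[OF i]] v_in_normals
      by blast
  ultimately show False by simp
qed

lemma accumulates_limit:
  assumes f: "inj f" "\<And>k. f k \<in> normals i" and lim: "f \<longlonglongrightarrow> w0"
  shows "accumulates i w0"
  unfolding accumulates_def
proof (intro allI impI)
  fix e :: real assume "e > 0"
  then obtain N where N: "\<And>k. k \<ge> N \<Longrightarrow> norm (f k - w0) < e"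
    using LIMSEQ_D[OF lim] by blast
  have "finite {w0, - w0}" by simp
  then obtain k where "k \<ge> N" "f k \<notin> {w0, - w0}" using inj_seq_avoids_finite[OF f(1)]
    by blast
  thus "\<exists>w\<in>normals i. w \<noteq> w0 \<and> w \<noteq> - w0 \<and> norm (w - w0) < e"
    using N f(2) by blast
qed

lemma normal_limit_at_wall:
  assumes i: "i < n" and q: "q \<in> normals i" and p: "p \<in> hplane t q"
    and ww: "mink t w0 w0 = 1" and pw: "mink t p w0 = 0"
    and f: "inj f" "\<And>k. f k \<in> normals i" and lim: "f \<longlonglongrightarrow> w0"
  shows "w0 = q \<or> w0 = - q"
proof (rule ccontr)
  assume "\<not> (w0 = q \<or> w0 = - q)"
  hence "w0 \<noteq> q" "w0 \<noteq> - q" by simp_all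
  then obtain a b where a: "a \<in> hplane t q" and b: "b \<in> hplane t q"
    and aw: "mink t a w0 < 0" and bw: "mink t b w0 > 0"
    by (rule hplane_points_both_sides[OF p mink_normal_self[OF i q] ww pw])
  have "eventually (\<lambda>k. mink t a (f k) < 0) sequentially"
    using order_tendstoD(2)[OF tendsto_mink[OF tendsto_const lim] aw] .
  moreover have "eventually (\<lambda>k. mink t b (f k) > 0) sequentially"
    using order_tendstoD(1)[OF tendsto_mink[OF tendsto_const lim] bw] .
  ultimately have "eventually (\<lambda>k. mink t a (f k) < 0 \<and> mink t b (f k) > 0) sequentially"
    by (rule eventually_conj)
  then obtain N where N: "\<And>k. k \<ge> N \<Longrightarrow> mink t a (f k) < 0 \<and> mink t b (f k) > 0"
    unfolding eventually_sequentially by blast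
  have "finite {q, - q}" by simp
  then obtain k where k: "k \<ge> N" "f k \<notin> {q, - q}" using inj_seq_avoids_finite[OF f(1)]
    by blast
  have "sgn (mink t a (f k)) \<noteq> sgn (mink t b (f k))" using N[OF k(1)] by simp
  moreover have "a \<in> hyp t" "b \<in> hyp t" using a b by (simp_all add: hplane_def)
  ultimately obtain s where s: "s \<in> {0..1}" and "chord t a b s \<in> hplane t (f k)"
    using chord_crosses_hplane by blast
  moreover have "chord t a b s \<in> hplane t q" by (rule chord_in_hplane[OF a b s])
  ultimately show False using walls_meet_imp_same[OF i i q f(2)] k(2) by blast
qed

lemma limit_of_normals_meeting_compact:
  assumes i: "i < n" and K: "compact K" "K \<subseteq> hyp t"
    and inf: "infinite {w \<in> normals i. \<exists>x\<in>K. mink t x w = 0}"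
  obtains f w0 p0 where "inj f" "\<And>k. f k \<in> normals i" "f \<longlonglongrightarrow> w0" "mink t w0 w0 = 1"
    "p0 \<in> wall_union i" "mink t p0 w0 = 0"
proof -
  obtain f :: "nat \<Rightarrow> real^'n" where finj: "inj f"
    and fS: "range f \<subseteq> {w \<in> normals i. \<exists>x\<in>K. mink t x w = 0}"
    using infinite_countable_subset[OF inf] by blast
  hence fW: "f k \<in> normals i" for k by auto
  have "\<forall>k. \<exists>x. x \<in> K \<and> mink t x (f k) = 0" using fS by blast
  then obtain p where pK: "\<And>k. p k \<in> K" and pf: "\<And>k. mink t (p k) (f k) = 0" by metis
  obtain B where B: "\<And>x. x \<in> K \<Longrightarrow> norm x \<le> B"
    using compact_imp_bounded[OF K(1)] unfolding bounded_iff by blast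
  have "norm (f k) \<le> 2 * B" for k
  proof -
    have "norm (f k) \<le> 2 * norm (p k)"
      using pK K(2) by (intro norm_unit_normal_le[OF _ pf mink_normal_self[OF i fW]]) auto
    thus ?thesis using B[OF pK[of k]] by simp
  qed
  hence inK: "\<forall>k. (p k, f k) \<in> K \<times> cball 0 (2 * B)" using pK by (simp add: dist_norm)
  obtain l r where r: "strict_mono r" and lim: "((\<lambda>k. (p k, f k)) \<circ> r) \<longlonglongrightarrow> l"
    using seq_compactE[OF compact_imp_seq_compact[OF compact_Times[OF K(1) compact_cball]] inK]
    by blast
  obtain p0 w0 where l0: "l = (p0, w0)" by (cases l)
  have pl: "(\<lambda>k. p (r k)) \<longlonglongrightarrow> p0" using tendsto_fst[OF lim] by (simp add: l0 o_def)
  have wl: "(\<lambda>k. f (r k)) \<longlonglongrightarrow> w0" using tendsto_snd[OF lim] by (simp add: l0 o_def)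
  have "(\<lambda>k. mink t (p (r k)) (f (r k))) \<longlonglongrightarrow> mink t p0 w0" by (rule tendsto_mink[OF pl wl])
  hence p0w0: "mink t p0 w0 = 0" using pf by (simp add: LIMSEQ_const_iff)
  have "(\<lambda>k. mink t (f (r k)) (f (r k))) \<longlonglongrightarrow> mink t w0 w0" by (rule tendsto_mink[OF wl wl])
  hence w0w0: "mink t w0 w0 = 1" using mink_normal_self[OF i fW] by (simp add: LIMSEQ_const_iff)
  have "p (r k) \<in> wall_union i" for k
    unfolding wall_union_iff using fW[of "r k"] pK[of "r k"] K(2) pf[of "r k"]
    by (auto simp: hplane_def)
  hence "p0 \<in> wall_union i" using closed_sequentially[OF closed_wall_union[OF i] _ pl] by blast
  moreover have "inj (\<lambda>k. f (r k))" using finj strict_mono_eq[OF r] by (auto simp: inj_def)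
  ultimately show ?thesis using that fW wl w0w0 p0w0 by blast
qed

text \<open>Otherwise distinct normals of walls meeting K converge to a unit vector w0
  orthogonal to a point p0 on a wall q. If w0 = \<plusminus>q, the normals accumulate at a normal,
  which Baire's theorem excludes; otherwise nearby walls would cross the wall of q.\<close>

lemma finite_walls_meeting_compact:
  assumes i: "i < n" and K: "compact K" "K \<subseteq> hyp t"
  shows "finite {w \<in> normals i. \<exists>x\<in>K. mink t x w = 0}"
proof (rule ccontr)
  assume "infinite {w \<in> normals i. \<exists>x\<in>K. mink t x w = 0}"
  then obtain f w0 p0 where f: "inj f" "\<And>k. f k \<in> normals i" and lim: "f \<longlonglongrightarrow> w0"
    and w0w0: "mink t w0 w0 = 1" and p0: "p0 \<in> wall_union i" and p0w0: "mink t p0 w0 = 0"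
    using limit_of_normals_meeting_compact[OF i K] by blast
  obtain q where q: "q \<in> normals i" and p0q: "p0 \<in> hplane t q"
    using p0 unfolding wall_union_iff by blast
  have "w0 = q \<or> w0 = - q" by (rule normal_limit_at_wall[OF i q p0q w0w0 p0w0 f lim])
  hence "w0 \<in> normals i" using q neg_in_normals by auto
  moreover have "accumulates i w0" by (rule accumulates_limit[OF f lim])
  ultimately have "accumulates i (v i)" using accumulates_normal_iff by blast
  with not_accumulates_v[OF i] show False ..
qed

section \<open>The wall cocycles\<close>

text \<open>Every wall is counted once through each of its normals w and - w, and an endpoint
  lying on the wall counts as half-way across it.\<close>

definition crossing_term :: "real^'n \<Rightarrow> real^'n \<Rightarrow> real^'n \<Rightarrow> real^'n" where
  "crossing_term x y w = ((sgn (mink t y w) - sgn (mink t x w)) / 2) *\<^sub>R w"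

lemma crossing_term_add: "crossing_term x z w = crossing_term x y w + crossing_term y z w"
  unfolding crossing_term_def by (simp add: scaleR_left_distrib[symmetric] diff_divide_distrib)

lemma norm_crossing_term_le: "norm (crossing_term x y w) \<le> norm w"
proof -
  have "\<bar>(sgn (mink t y w) - sgn (mink t x w)) / 2\<bar> \<le> 1"
    by (auto simp: sgn_if)
  hence "\<bar>(sgn (mink t y w) - sgn (mink t x w)) / 2\<bar> * norm w \<le> 1 * norm w"
    by (rule mult_right_mono) simp
  thus ?thesis unfolding crossing_term_def by simp
qed

definition separating_normals :: "nat \<Rightarrow> real^'n \<Rightarrow> real^'n \<Rightarrow> (real^'n) set" where
  "separating_normals i x y = {w \<in> normals i. sgn (mink t x w) \<noteq> sgn (mink t y w)}"

definition wall_sum :: "nat \<Rightarrow> real^'n \<Rightarrow> real^'n \<Rightarrow> real^'n" where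
  "wall_sum i x y = (\<Sum>w\<in>separating_normals i x y. crossing_term x y w)"

lemma separating_normals_subset:
  assumes x: "x \<in> hyp t" and y: "y \<in> hyp t"
  shows "separating_normals i x y \<subseteq> {w \<in> normals i. \<exists>z\<in>chord t x y ` {0..1}. mink t z w = 0}"
proof
  fix w assume "w \<in> separating_normals i x y"
  hence w: "w \<in> normals i" "sgn (mink t x w) \<noteq> sgn (mink t y w)"
    by (auto simp: separating_normals_def)
  then obtain s where "s \<in> {0..1}" "chord t x y s \<in> hplane t w"
    using chord_crosses_hplane[OF x y] by blast
  thus "w \<in> {w \<in> normals i. \<exists>z\<in>chord t x y ` {0..1}. mink t z w = 0}" using w
    by (auto simp: hplane_def)
qed

lemma finite_separating_normals:
  assumes i: "i < n" and x: "x \<in> hyp t" and y: "y \<in> hyp t"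
  shows "finite (separating_normals i x y)"
  using separating_normals_subset[OF x y] finite_walls_meeting_compact[OF i compact_chord_image[OF x y]]
  by (rule finite_subset)

lemma crossing_term_zero:
  "w \<notin> separating_normals i x y \<Longrightarrow> w \<in> normals i \<Longrightarrow> crossing_term x y w = 0"
  unfolding separating_normals_def crossing_term_def by auto

lemma wall_sum_superset:
  assumes i: "i < n" and x: "x \<in> hyp t" and y: "y \<in> hyp t"
    and S: "finite S" "separating_normals i x y \<subseteq> S" "S \<subseteq> normals i"
  shows "wall_sum i x y = (\<Sum>w\<in>S. crossing_term x y w)"
  unfolding wall_sum_def
  by (rule sum.mono_neutral_left[OF S(1) S(2)]) (use S(3) crossing_term_zero in blast)

lemma wall_sum_trans:
  assumes i: "i < n" and x: "x \<in> hyp t" and y: "y \<in> hyp t" and z: "z \<in> hyp t"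
  shows "wall_sum i x z = wall_sum i x y + wall_sum i y z"
proof -
  define S where "S = separating_normals i x y \<union> separating_normals i y z \<union> separating_normals i x z"
  have fS: "finite S" unfolding S_def using finite_separating_normals i x y z by auto
  have SW: "S \<subseteq> normals i" unfolding S_def separating_normals_def by auto
  have "wall_sum i x z = (\<Sum>w\<in>S. crossing_term x z w)"
    by (rule wall_sum_superset[OF i x z fS _ SW]) (auto simp: S_def)
  also have "\<dots> = (\<Sum>w\<in>S. crossing_term x y w) + (\<Sum>w\<in>S. crossing_term y z w)"
    unfolding sum.distrib[symmetric] by (rule sum.cong) (auto intro: crossing_term_add)
  also have "(\<Sum>w\<in>S. crossing_term x y w) = wall_sum i x y"
    by (rule wall_sum_superset[symmetric, OF i x y fS _ SW]) (auto simp: S_def)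
  also have "(\<Sum>w\<in>S. crossing_term y z w) = wall_sum i y z"
    by (rule wall_sum_superset[symmetric, OF i y z fS _ SW]) (auto simp: S_def)
  finally show ?thesis .
qed

lemma separating_normals_lattice_action:
  assumes A: "A \<in> G"
  shows "separating_normals i (A *v x) (A *v y) = (*v) A ` separating_normals i x y"
proof
  show "separating_normals i (A *v x) (A *v y) \<subseteq> (*v) A ` separating_normals i x y"
  proof
    fix w assume w: "w \<in> separating_normals i (A *v x) (A *v y)"
    define w' where "w' = matrix_inv A *v w"
    have ww': "w = A *v w'" unfolding w'_def using lattice_inv_cancel[OF A] by simp
    have "w' \<in> normals i" unfolding w'_def using w lattice_normals[OF lattice_inv[OF A]]
      by (auto simp: separating_normals_def)
    moreover have "sgn (mink t x w') \<noteq> sgn (mink t y w')"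
      using w unfolding ww' separating_normals_def by (simp add: lattice_mink[OF A])
    ultimately have "w' \<in> separating_normals i x y" unfolding separating_normals_def by simp
    thus "w \<in> (*v) A ` separating_normals i x y" using ww' by blast
  qed
  show "(*v) A ` separating_normals i x y \<subseteq> separating_normals i (A *v x) (A *v y)"
    using lattice_normals[OF A] by (auto simp: separating_normals_def lattice_mink[OF A])
qed

lemma wall_sum_lattice_action:
  assumes i: "i < n" and A: "A \<in> G" and x: "x \<in> hyp t" and y: "y \<in> hyp t"
  shows "wall_sum i (A *v x) (A *v y) = A *v wall_sum i x y"
proof -
  have "wall_sum i (A *v x) (A *v y) = (\<Sum>w\<in>(*v) A ` separating_normals i x y. crossing_term (A *v x) (A *v y) w)"
    unfolding wall_sum_def separating_normals_lattice_action[OF A] ..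
  also have "\<dots> = (\<Sum>w\<in>separating_normals i x y. crossing_term (A *v x) (A *v y) (A *v w))"
    by (rule sum.reindex[unfolded o_def]) (use inj_lattice_action[OF A] in \<open>auto simp: inj_on_def inj_def\<close>)
  also have "\<dots> = (\<Sum>w\<in>separating_normals i x y. A *v crossing_term x y w)"
    by (rule sum.cong) (simp_all add: crossing_term_def lattice_mink[OF A] matrix_vector_mult_scaleR)
  also have "\<dots> = A *v wall_sum i x y"
    unfolding wall_sum_def by (rule linear_sum[OF matrix_vector_mul_linear, symmetric])
  finally show ?thesis .
qed

definition wall_cocycle :: "nat \<Rightarrow> real^'n^'n \<Rightarrow> real^'n" where
  "wall_cocycle i A = wall_sum i (hyp_base t) (A *v (hyp_base t))"

lemma cocycle_wall_cocycle:
  assumes i: "i < n"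
  shows "cocycle G (wall_cocycle i)"
  unfolding cocycle_def
proof (intro ballI)
  fix A B assume A: "A \<in> G" and B: "B \<in> G"
  define x0 where "x0 = hyp_base t"
  have x0: "x0 \<in> hyp t" unfolding x0_def by (rule hyp_base_in_hyp)
  have Ax: "A *v x0 \<in> hyp t" and Bx: "B *v x0 \<in> hyp t" using lattice_hyp A B x0 by auto
  have "wall_cocycle i (A ** B) = wall_sum i x0 (A *v x0) + wall_sum i (A *v x0) (A *v (B *v x0))"
    unfolding wall_cocycle_def x0_def[symmetric] matrix_vector_mul_assoc[symmetric]
    by (rule wall_sum_trans[OF i x0 Ax lattice_hyp[OF A Bx]])
  also have "\<dots> = wall_cocycle i A + A *v wall_cocycle i B"
    unfolding wall_cocycle_def x0_def[symmetric] wall_sum_lattice_action[OF i A x0 Bx] ..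
  finally show "wall_cocycle i (A ** B) = wall_cocycle i A + A *v wall_cocycle i B" .
qed

lemma wall_sum_bounded_on_compact:
  assumes i: "i < n" and x: "x \<in> hyp t" and K: "compact K" "K \<subseteq> hyp t"
  shows "\<exists>C. \<forall>k\<in>K. norm (wall_sum i x k) \<le> C"
proof (intro exI ballI)
  define F where "F = (\<lambda>(s, k). chord t x k s) ` ({0..1} \<times> K)"
  define T where "T = {w \<in> normals i. \<exists>z\<in>F. mink t z w = 0}"
  have "finite T"
    unfolding T_def F_def by (intro finite_walls_meeting_compact[OF i] compact_chord_fan[OF x K])
  fix k assume k: "k \<in> K"
  have "chord t x k ` {0..1} \<subseteq> F" unfolding F_def using k by force
  hence sub: "separating_normals i x k \<subseteq> T"
    using separating_normals_subset[OF x] k K(2) unfolding T_def by blast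
  have "norm (wall_sum i x k) \<le> (\<Sum>w\<in>separating_normals i x k. norm (crossing_term x k w))"
    unfolding wall_sum_def by (rule norm_sum)
  also have "\<dots> \<le> (\<Sum>w\<in>separating_normals i x k. norm w)"
    by (intro sum_mono norm_crossing_term_le)
  also have "\<dots> \<le> (\<Sum>w\<in>T. norm w)"
    by (intro sum_mono2[OF \<open>finite T\<close> sub]) simp
  finally show "norm (wall_sum i x k) \<le> (\<Sum>w\<in>T. norm w)" .
qed

lemma finite_normals_crossing_chord:
  assumes x: "x \<in> hyp t" and y: "y \<in> hyp t"
  shows "finite {w. (\<exists>i<n. w \<in> normals i) \<and> (\<exists>s\<in>{0..1}. (1 - s) * mink t x w + s * mink t y w = 0)}"
proof (rule finite_subset)
  show "{w. (\<exists>i<n. w \<in> normals i) \<and> (\<exists>s\<in>{0..1}. (1 - s) * mink t x w + s * mink t y w = 0)}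
      \<subseteq> (\<Union>i<n. {w \<in> normals i. \<exists>z\<in>chord t x y ` {0..1}. mink t z w = 0})"
    using mink_chord_eq_0_iff[OF x y] by blast
  show "finite (\<Union>i<n. {w \<in> normals i. \<exists>z\<in>chord t x y ` {0..1}. mink t z w = 0})"
    by (intro finite_UN_I finite_lessThan finite_walls_meeting_compact compact_chord_image[OF x y])
      auto
qed

text \<open>A point xs far out on the positive side of q is a translate A k of a point k of a
  compact fundamental set. The foot of the perpendicular from k to the wall of q stays at
  bounded distance from k, so its translate, which lies on the wall of A q, is still on the
  positive side of q.\<close>

lemma wall_on_positive_side:
  assumes j: "j < n" and q: "q \<in> normals j" and y: "y \<in> hplane t q"
  obtains w y' where "w \<in> normals j" "y' \<in> hplane t w" "mink t y' q > 0"
proof -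
  obtain K where K: "compact K" "K \<subseteq> hyp t" and cov: "(\<Union>A\<in>G. (\<lambda>x. A *v x) ` K) = hyp t"
    by (rule compact_fundamental_set)
  obtain B where B: "\<And>x. x \<in> K \<Longrightarrow> norm x \<le> B"
    using compact_imp_bounded[OF K(1)] unfolding bounded_iff by blast
  have qq: "mink t q q = 1" by (rule mink_normal_self[OF j q])
  have yh: "y \<in> hyp t" and yq: "mink t y q = 0" using y by (auto simp: hplane_def)
  define C where "C = 1 + \<bar>B\<bar> * norm q"
  define s where "s = arsinh C"
  have shs: "sinh s = C" and spos: "sinh s > 0" unfolding s_def C_def
    by (simp_all add: add_pos_nonneg)
  define xs where "xs = cosh s *\<^sub>R y + sinh s *\<^sub>R q"
  have "xs \<in> hyp t" unfolding xs_def
    by (rule geodesic_in_hyp[OF yh _ qq]) (subst mink_sym, rule yq)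
  then obtain A k where A: "A \<in> G" and k: "k \<in> K" and xk: "xs = A *v k" using cov by blast
  have kh: "k \<in> hyp t" using k K(2) by auto
  define r where "r = hplane_proj t k q"
  have r: "r \<in> hplane t q" unfolding r_def by (rule hplane_proj_in_hplane[OF kh qq])
  have "sqrt (1 + (mink t k q)^2) \<le> sqrt ((1 + \<bar>mink t k q\<bar>)^2)"
    by (rule real_sqrt_le_mono) (simp add: power2_eq_square algebra_simps)
  also have "\<dots> = 1 + \<bar>mink t k q\<bar>" by simp
  also have "\<bar>mink t k q\<bar> \<le> norm k * norm q" by (rule abs_mink_le)
  also have "norm k * norm q \<le> \<bar>B\<bar> * norm q" using B[OF k]
    by (intro mult_right_mono) auto
  finally have kr: "mink t k r \<ge> - C"
    unfolding r_def mink_hplane_proj_self[OF kh qq] C_def by simp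
  have r': "A *v r \<in> hplane t (A *v q)" using r hplane_lattice_action[OF A] by blast
  hence r'h: "A *v r \<in> hyp t" by (simp add: hplane_def)
  have "mink t (A *v r) q > 0"
  proof (rule ccontr)
    assume "\<not> mink t (A *v r) q > 0"
    hence "sinh s * mink t q (A *v r) \<le> 0" using spos by (simp add: mink_sym mult_nonneg_nonpos)
    moreover have "cosh s * mink t y (A *v r) \<le> cosh s * (-1)"
      using mink_hyp_le_neg1[OF yh r'h] cosh_real_pos[of s] by (intro mult_left_mono) simp_all
    ultimately have "mink t xs (A *v r) \<le> - cosh s" unfolding xs_def mink_geodesic by simp
    moreover have "mink t xs (A *v r) = mink t k r" unfolding xk lattice_mink[OF A] ..
    ultimately show False using kr shs sinh_less_cosh_real[of s] by simp
  qed
  thus ?thesis using that[OF lattice_normals[OF A q] r'] by blast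
qed

lemma first_wall_crossed:
  assumes j: "j < n" and q: "q \<in> normals j" and y: "y \<in> hplane t q"
  obtains k ws ys where "k < n" "ws \<in> normals k" "ys \<in> hplane t ws" "mink t ys q > 0"
    "ws \<noteq> q" "ws \<noteq> - q"
    "\<And>i w. i < n \<Longrightarrow> w \<in> normals i \<Longrightarrow> w \<notin> {q, - q, ws, - ws} \<Longrightarrow>
       sgn (mink t y w) = sgn (mink t ys w)"
proof -
  obtain w0 y' where w0: "w0 \<in> normals j" and y'w0: "y' \<in> hplane t w0"
    and y'q: "mink t y' q > 0" by (rule wall_on_positive_side[OF j q y])
  have yh: "y \<in> hyp t" and yq: "mink t y q = 0" using y by (auto simp: hplane_def)
  have y'h: "y' \<in> hyp t" and y'w: "mink t y' w0 = 0" using y'w0 by (auto simp: hplane_def)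
  define P where "P = {w. (\<exists>i<n. w \<in> normals i) \<and> w \<noteq> q \<and> w \<noteq> - q}"
  have fin: "finite {w \<in> P. \<exists>s\<in>{0..1}. (1 - s) * mink t y w + s * mink t y' w = 0}"
    by (rule finite_subset[OF _ finite_normals_crossing_chord[OF yh y'h]]) (auto simp: P_def)
  have w0P: "w0 \<in> P" unfolding P_def using j w0 y'w y'q by (auto simp: mink_neg_right)
  have nz: "mink t y w \<noteq> 0" if wP: "w \<in> P" for w
  proof
    assume "mink t y w = 0"
    hence yw: "y \<in> hplane t w" using yh by (simp add: hplane_def)
    obtain i where i: "i < n" "w \<in> normals i" using wP unfolding P_def by blast
    have "q = w \<or> q = - w" using walls_meet_imp_same[OF i(1) j i(2) q yw y] by simp
    thus False using wP unfolding P_def by auto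
  qed
  have one: "(1::real) \<in> {0..1}" "(1 - 1) * mink t y w0 + 1 * mink t y' w0 = 0" using y'w
    by simp_all
  obtain ws ss where ws: "ws \<in> P" and ss: "ss \<in> {0<..1}"
    and wss: "(1 - ss) * mink t y ws + ss * mink t y' ws = 0"
    and first: "\<And>w. w \<in> P \<Longrightarrow> (1 - ss) * mink t y w + ss * mink t y' w \<noteq> 0 \<Longrightarrow>
       sgn (mink t y w) = sgn ((1 - ss) * mink t y w + ss * mink t y' w)"
    using first_sign_change[OF fin w0P one nz] by blast
  have ss01: "ss \<in> {0..1}" using ss by simp
  define ys where "ys = chord t y y' ss"
  have ysw: "ys \<in> hplane t ws" unfolding ys_def chord_in_hplane_iff[OF yh y'h ss01] by (rule wss)
  obtain k where k: "k < n" "ws \<in> normals k" using ws unfolding P_def by blast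
  have pos: "mink t ys q > 0"
    using sgn_mink_chord[OF yh y'h ss01, of q] yq y'q ss unfolding ys_def by (simp add: sgn_1_pos)
  have inv: "sgn (mink t y w) = sgn (mink t ys w)"
    if i: "i < n" and w: "w \<in> normals i" and nw: "w \<notin> {q, - q, ws, - ws}" for i w
  proof (cases "(1 - ss) * mink t y w + ss * mink t y' w = 0")
    case True
    hence "ys \<in> hplane t w" unfolding ys_def chord_in_hplane_iff[OF yh y'h ss01] .
    thus ?thesis using walls_meet_imp_same[OF k(1) i k(2) w ysw] nw by auto
  next
    case False
    have "w \<in> P" using i w nw unfolding P_def by auto
    thus ?thesis using first[OF _ False] sgn_mink_chord[OF yh y'h ss01] unfolding ys_def by simp
  qed
  show ?thesis
  proof (rule that[OF k ysw pos])
    show "ws \<noteq> q" "ws \<noteq> - q" using ws unfolding P_def by auto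
  qed (rule inv)
qed

lemma wall_sum_to_first_wall:
  assumes j: "j < n" and q: "q \<in> normals j" and y: "y \<in> hplane t q"
  obtains k ws ys \<sigma> where "k < n" "ws \<in> normals k" "ys \<in> hplane t ws" "mink t ys q > 0"
    "\<And>i. i < n \<Longrightarrow>
       wall_sum i y ys = (if i = j then q else 0) + (if i = k then \<sigma> *\<^sub>R ws else 0)"
proof -
  obtain k ws ys where k: "k < n" and ws: "ws \<in> normals k" and ysw: "ys \<in> hplane t ws"
    and ysq: "mink t ys q > 0" and wsq: "ws \<noteq> q" "ws \<noteq> - q"
    and inv: "\<And>i w. i < n \<Longrightarrow> w \<in> normals i \<Longrightarrow> w \<notin> {q, - q, ws, - ws} \<Longrightarrow>
       sgn (mink t y w) = sgn (mink t ys w)"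
    using first_wall_crossed[OF j q y] by blast
  have yh: "y \<in> hyp t" and yq: "mink t y q = 0" using y by (auto simp: hplane_def)
  have ysh: "ys \<in> hyp t" and ysw0: "mink t ys ws = 0" using ysw by (auto simp: hplane_def)
  have "q \<noteq> - q" "ws \<noteq> - ws"
    using normal_nonzero[OF j q] normal_nonzero[OF k ws]
      by (simp_all add: eq_neg_iff_add_eq_0 scaleR_2[symmetric])
  moreover have "- q \<noteq> ws" "- q \<noteq> - ws" "q \<noteq> - ws" using wsq by auto
  ultimately have distinct: "q \<noteq> - q" "ws \<noteq> - ws" "- q \<noteq> ws" "- q \<noteq> - ws" "q \<noteq> - ws" by blast+
  have in_normals: "q \<in> normals i \<longleftrightarrow> i = j" "- q \<in> normals i \<longleftrightarrow> i = j"
    "ws \<in> normals i \<longleftrightarrow> i = k" "- ws \<in> normals i \<longleftrightarrow> i = k" if i: "i < n" for i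
    using normal_index_unique[OF i j q y] normal_index_unique[OF i j neg_in_normals[OF q]]
      normal_index_unique[OF i k ws ysw] normal_index_unique[OF i k neg_in_normals[OF ws]] y ysw
    by (simp_all add: hplane_neg)
  define \<sigma> where "\<sigma> = - sgn (mink t y ws)"
  have cross_q: "crossing_term y ys q + crossing_term y ys (- q) = q"
    using ysq yq by (simp add: crossing_term_def mink_neg_right sgn_1_pos)
  have "crossing_term y ys ws = (\<sigma> / 2) *\<^sub>R ws" "crossing_term y ys (- ws) = (\<sigma> / 2) *\<^sub>R ws"
    using ysw0 by (simp_all add: crossing_term_def \<sigma>_def mink_neg_right)
  hence cross_ws: "crossing_term y ys ws + crossing_term y ys (- ws) = \<sigma> *\<^sub>R ws"
    by (simp add: scaleR_left_distrib[symmetric])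
  have "wall_sum i y ys = (if i = j then q else 0) + (if i = k then \<sigma> *\<^sub>R ws else 0)"
    if i: "i < n" for i
  proof -
    define S where "S = {w \<in> {q, - q, ws, - ws}. w \<in> normals i}"
    have "separating_normals i y ys \<subseteq> S"
      using inv[OF i] unfolding separating_normals_def S_def by blast
    hence "wall_sum i y ys = (\<Sum>w\<in>S. crossing_term y ys w)"
      by (intro wall_sum_superset[OF i yh ysh]) (auto simp: S_def)
    also have "\<dots> = (if i = j then q else 0) + (if i = k then \<sigma> *\<^sub>R ws else 0)"
    proof -
      have "S = (if i = j then {q, - q} else {}) \<union> (if i = k then {ws, - ws} else {})"
        unfolding S_def using in_normals[OF i] by auto
      thus ?thesis using distinct wsq cross_q cross_ws
        by (auto simp: sum.union_disjoint algebra_simps)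
    qed
    finally show ?thesis .
  qed
  thus ?thesis using that k ws ysw ysq by blast
qed

end

section \<open>Independence of the wall cocycles\<close>

locale wall_coboundary = wall_system t G n v
  for t :: "'n::finite" and G n v +
  fixes c :: "nat \<Rightarrow> real" and u :: "real^'n"
  assumes cob: "\<forall>A\<in>G. (\<Sum>i<n. c i *\<^sub>R wall_cocycle i A) = A *v u - u"
begin

definition weighted_wall_sum :: "real^'n \<Rightarrow> real^'n \<Rightarrow> real^'n" where
  "weighted_wall_sum x y = (\<Sum>i<n. c i *\<^sub>R wall_sum i x y)"

lemma weighted_wall_sum_trans:
  assumes x: "x \<in> hyp t" and y: "y \<in> hyp t" and z: "z \<in> hyp t"
  shows "weighted_wall_sum x z = weighted_wall_sum x y + weighted_wall_sum y z"
  unfolding weighted_wall_sum_def sum.distrib[symmetric]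
  by (rule sum.cong) (simp_all add: wall_sum_trans[OF _ x y z] scaleR_right_distrib)

lemma weighted_wall_sum_lattice_action:
  assumes A: "A \<in> G" and x: "x \<in> hyp t" and y: "y \<in> hyp t"
  shows "weighted_wall_sum (A *v x) (A *v y) = A *v weighted_wall_sum x y"
proof -
  have "weighted_wall_sum (A *v x) (A *v y) = (\<Sum>i<n. A *v (c i *\<^sub>R wall_sum i x y))"
    unfolding weighted_wall_sum_def
      by (rule sum.cong) (simp_all add: wall_sum_lattice_action[OF _ A x y] matrix_vector_mult_scaleR)
  also have "\<dots> = A *v weighted_wall_sum x y"
    unfolding weighted_wall_sum_def by (rule linear_sum[OF matrix_vector_mul_linear, symmetric])
  finally show ?thesis .
qed

definition potential :: "real^'n \<Rightarrow> real^'n" where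
  "potential y = u + weighted_wall_sum (hyp_base t) y"

lemma potential_trans:
  "x \<in> hyp t \<Longrightarrow> y \<in> hyp t \<Longrightarrow> potential y = potential x + weighted_wall_sum x y"
  unfolding potential_def using weighted_wall_sum_trans[OF hyp_base_in_hyp, of x y] by simp

lemma potential_equivariant:
  assumes A: "A \<in> G" and y: "y \<in> hyp t"
  shows "potential (A *v y) = A *v potential y"
proof -
  define x0 where "x0 = hyp_base t"
  have x0: "x0 \<in> hyp t" unfolding x0_def by (rule hyp_base_in_hyp)
  have "potential (A *v y) = potential (A *v x0) + weighted_wall_sum (A *v x0) (A *v y)"
    by (rule potential_trans[OF lattice_hyp[OF A x0] lattice_hyp[OF A y]])
  also have "weighted_wall_sum (A *v x0) (A *v y) = A *v weighted_wall_sum x0 y"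
    by (rule weighted_wall_sum_lattice_action[OF A x0 y])
  also have "potential (A *v x0) = A *v u"
    using cob A unfolding potential_def weighted_wall_sum_def wall_cocycle_def x0_def by simp
  finally show ?thesis unfolding potential_def x0_def by (simp add: matrix_vector_right_distrib)
qed

lemma potential_bounded_on_compact:
  assumes K: "compact K" "K \<subseteq> hyp t"
  shows "\<exists>C. \<forall>k\<in>K. norm (potential k) \<le> C"
proof -
  have "\<forall>i\<in>{..<n}. \<exists>C. \<forall>k\<in>K. norm (wall_sum i (hyp_base t) k) \<le> C"
    using wall_sum_bounded_on_compact[OF _ hyp_base_in_hyp K] by blast
  then obtain C where C: "\<forall>i\<in>{..<n}. \<forall>k\<in>K. norm (wall_sum i (hyp_base t) k) \<le> C i"
    by (rule bchoice[elim_format]) blast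
  have "norm (potential k) \<le> norm u + (\<Sum>i<n. \<bar>c i\<bar> * C i)" if k: "k \<in> K" for k
  proof -
    have "norm (weighted_wall_sum (hyp_base t) k) \<le> (\<Sum>i<n. norm (c i *\<^sub>R wall_sum i (hyp_base t) k))"
      unfolding weighted_wall_sum_def by (rule norm_sum)
    also have "\<dots> \<le> (\<Sum>i<n. \<bar>c i\<bar> * C i)"
    proof (rule sum_mono)
      fix i assume "i \<in> {..<n}"
      hence "norm (wall_sum i (hyp_base t) k) \<le> C i" using C k by blast
      thus "norm (c i *\<^sub>R wall_sum i (hyp_base t) k) \<le> \<bar>c i\<bar> * C i"
        by (simp add: mult_left_mono)
    qed
    finally show ?thesis
      unfolding potential_def using norm_triangle_ineq[of u "weighted_wall_sum (hyp_base t) k"]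
        by linarith
  qed
  thus ?thesis by blast
qed

lemma mink_potential_bounded: "\<exists>M. \<forall>y\<in>hyp t. \<bar>mink t y (potential y)\<bar> \<le> M"
proof -
  obtain K where K: "compact K" "K \<subseteq> hyp t" and cov: "(\<Union>A\<in>G. (\<lambda>x. A *v x) ` K) = hyp t"
    by (rule compact_fundamental_set)
  obtain C where C: "\<And>k. k \<in> K \<Longrightarrow> norm (potential k) \<le> C"
    using potential_bounded_on_compact[OF K] by blast
  obtain B where B: "\<And>x. x \<in> K \<Longrightarrow> norm x \<le> B"
    using compact_imp_bounded[OF K(1)] unfolding bounded_iff by blast
  have "\<bar>mink t y (potential y)\<bar> \<le> B * C" if y: "y \<in> hyp t" for y
  proof -
    obtain A k where A: "A \<in> G" and k: "k \<in> K" and yk: "y = A *v k" using y cov by blast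
    have "mink t y (potential y) = mink t k (potential k)"
      using k K(2) unfolding yk by (auto simp: potential_equivariant[OF A] lattice_mink[OF A])
    also have "\<bar>\<dots>\<bar> \<le> norm k * norm (potential k)" by (rule abs_mink_le)
    also have "\<dots> \<le> B * C" using B[OF k] C[OF k] by (simp add: mult_mono')
    finally show ?thesis .
  qed
  thus ?thesis by blast
qed

lemma weighted_wall_sum_along_wall:
  assumes j: "j < n" and q: "q \<in> normals j" and y1: "y1 \<in> hplane t q" and y2: "y2 \<in> hplane t q"
  shows "weighted_wall_sum y1 y2 = 0"
proof -
  have h: "y1 \<in> hyp t" "y2 \<in> hyp t" and q0: "mink t y1 q = 0" "mink t y2 q = 0"
    using y1 y2 by (auto simp: hplane_def)
  have "separating_normals i y1 y2 = {}" if i: "i < n" for i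
  proof (rule ccontr)
    assume "separating_normals i y1 y2 \<noteq> {}"
    then obtain w where w: "w \<in> normals i" and sg: "sgn (mink t y1 w) \<noteq> sgn (mink t y2 w)"
      by (auto simp: separating_normals_def)
    then obtain s where s: "s \<in> {0..1}" and "chord t y1 y2 s \<in> hplane t w"
      using chord_crosses_hplane[OF h] by blast
    hence "w = q \<or> w = - q" using walls_meet_imp_same[OF j i q w chord_in_hplane[OF y1 y2 s]]
      by blast
    thus False using sg q0 by (auto simp: mink_neg_right)
  qed
  thus ?thesis unfolding weighted_wall_sum_def wall_sum_def by simp
qed

lemma potential_const_on_wall:
  assumes j: "j < n" and q: "q \<in> normals j" and y1: "y1 \<in> hplane t q" and y2: "y2 \<in> hplane t q"
  shows "potential y2 = potential y1"
  using potential_trans[of y1 y2] weighted_wall_sum_along_wall[OF assms] y1 y2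
    by (simp add: hplane_def)

text \<open>The pairing with the potential is bounded, but a nonzero component of the
  potential orthogonal to q would pair unboundedly with points of the wall.\<close>

lemma potential_parallel_normal:
  assumes j: "j < n" and q: "q \<in> normals j" and y: "y \<in> hplane t q"
  shows "potential y = mink t (potential y) q *\<^sub>R q"
proof (rule ccontr)
  define z where "z = potential y - mink t (potential y) q *\<^sub>R q"
  assume "potential y \<noteq> mink t (potential y) q *\<^sub>R q"
  hence z0: "z \<noteq> 0" unfolding z_def by simp
  have qq: "mink t q q = 1" by (rule mink_normal_self[OF j q])
  have zq: "mink t z q = 0" unfolding z_def mink_diff_left mink_scale_left qq by simp
  obtain M where M: "\<And>y. y \<in> hyp t \<Longrightarrow> \<bar>mink t y (potential y)\<bar> \<le> M"
    using mink_potential_bounded by blast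
  obtain y2 where y2: "y2 \<in> hplane t q" and big: "\<bar>mink t y2 z\<bar> > M"
    using mink_unbounded_on_hplane[OF card3 qq zq z0] by blast
  have "mink t y2 z = mink t y2 (potential y2)"
    using y2 unfolding z_def mink_diff_right mink_scale_right potential_const_on_wall[OF j q y y2]
    by (simp add: hplane_def)
  thus False using M big y2 by (force simp: hplane_def)
qed

text \<open>Crossing from the wall of q to the first wall ws met on its positive side adds
  c j * q plus a multiple of ws to the potential; pairing with the point reached, which
  is orthogonal to ws, isolates the coefficient of q.\<close>

lemma mink_potential_normal:
  assumes j: "j < n" and q: "q \<in> normals j" and y: "y \<in> hplane t q"
  shows "mink t (potential y) q = - c j"
proof -
  obtain k ws ys \<sigma> where k: "k < n" and ws: "ws \<in> normals k" and ysw: "ys \<in> hplane t ws"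
    and ysq: "mink t ys q > 0"
    and sums: "\<And>i. i < n \<Longrightarrow>
       wall_sum i y ys = (if i = j then q else 0) + (if i = k then \<sigma> *\<^sub>R ws else 0)"
    using wall_sum_to_first_wall[OF j q y] by blast
  have ysh: "ys \<in> hyp t" and ysw0: "mink t ys ws = 0" using ysw by (auto simp: hplane_def)
  have "weighted_wall_sum y ys = (\<Sum>i<n. (if i = j then c i *\<^sub>R q else 0) + (if i = k then c i *\<^sub>R \<sigma> *\<^sub>R ws else 0))"
    unfolding weighted_wall_sum_def by (rule sum.cong) (simp_all add: sums scaleR_right_distrib)
  also have "\<dots> = c j *\<^sub>R q + c k *\<^sub>R \<sigma> *\<^sub>R ws" unfolding sum.distrib
    using j k by simp
  finally have jump: "weighted_wall_sum y ys = c j *\<^sub>R q + c k *\<^sub>R \<sigma> *\<^sub>R ws" .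
  have "0 = mink t ys (potential ys)"
    by (subst potential_parallel_normal[OF k ws ysw]) (simp add: mink_scale_right ysw0)
  also have "\<dots> = mink t ys (potential y) + mink t ys (weighted_wall_sum y ys)"
    using potential_trans[of y ys] y ysh by (simp add: hplane_def mink_add_right)
  also have "\<dots> = (mink t (potential y) q + c j) * mink t ys q"
    by (subst potential_parallel_normal[OF j q y])
      (simp add: jump mink_add_right mink_scale_right ysw0 algebra_simps)
  finally show ?thesis using ysq by simp
qed

end

context wall_system
begin

theorem H1_dim_ge_wall_cocycles: "H1_dim_ge G n"
  unfolding H1_dim_ge_def
proof (intro exI[of _ wall_cocycle] conjI allI impI)
  show "cocycle G (wall_cocycle i)" if "i < n" for i by (rule cocycle_wall_cocycle[OF that])
  fix c :: "nat \<Rightarrow> real" and i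
  assume "coboundary G (\<lambda>A. \<Sum>i<n. c i *\<^sub>R wall_cocycle i A)" and i: "i < n"
  then obtain u where u: "\<forall>A\<in>G. (\<Sum>i<n. c i *\<^sub>R wall_cocycle i A) = A *v u - u"
    unfolding coboundary_def by blast
  interpret wall_coboundary t G n v c u
    using wall_system_axioms u by (simp add: wall_coboundary_def wall_coboundary_axioms_def)
  define y where "y = hplane_proj t (hyp_base t) (v i)"
  have y: "y \<in> hplane t (v i)" unfolding y_def by (rule hplane_proj_base[OF mink_v_self[OF i]])
  have "mink t (potential y) (v i) = - c i"
    by (rule mink_potential_normal[OF i v_in_normals y])
  moreover have "mink t (potential y) (- v i) = - c i"
    using y by (intro mink_potential_normal[OF i neg_in_normals[OF v_in_normals]]) (simp add: hplane_neg)
  ultimately show "c i = 0" by (simp add: mink_neg_right)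
qed

end

theorem theorem3p3:
  fixes t :: "'n::finite" and \<Gamma> :: "(real^'n^'n) set"
    and n :: nat and v :: "nat \<Rightarrow> real^'n"
  assumes "CARD('n) \<ge> 3"
    and "cocompact_lattice t \<Gamma>"
    and "orientation_preserving \<Gamma>"
    and "\<forall>i<n. embedded_tg_hypersurface t \<Gamma> (v i)"
    and "\<forall>i<n. \<forall>j<n. i \<noteq> j \<longrightarrow> disjoint_hypersurfaces t \<Gamma> (v i) (v j)"
  shows "H1_dim_ge \<Gamma> n"
proof -
  interpret wall_system t \<Gamma> n v by (rule wall_system.intro) (rule assms)+
  show ?thesis by (rule H1_dim_ge_wall_cocycles)
qed

end
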